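(* Under the setting below, assume additionally that $G$ is convex (so $\mathbf T$ is single-valued). Then: (a) for every $\bm x\in\mathbb R^n$, $\operatorname{dist}(0,\partial\Phi^{\mathrm{FB}}_\Gamma(\bm x))\le\frac{N+\max_i\gamma_iL_{f_i}}{N\min_i\sqrt{\gamma_i}}\,\|\bm x-\mathbf T(\bm x)\|_{\Gamma^{-1}}$, where $\partial$ is the limiting subdifferential; (b) $\mathbf T$ is Lipschitz continuous with respect to $\|\cdot\|_{\Gamma^{-1}}$ with some constant $L_{\mathbf T}\ge0$; if in addition each $f_i$ is $\mu_{f_i}$-strongly convex, then one can take $L_{\mathbf T}\le1-\delta$ with $\delta=\frac1N\min_{i\in[N]}\gamma_i\mu_{f_i}$.
   Context: Setting: $N\ge1$, $n=\sum_{i=1}^N n_i$, $\bm x=(x_1,\dots,x_N)$ with $x_i\in\mathbb R^{n_i}$; $\Phi=F+G$ with $F(\bm x)=\frac1N\sum_i f_i(x_i)$, each $f_i:\mathbb R^{n_i}\to\mathbb R$ differentiable with $L_{f_i}$-Lipschitz gradient, $G:\mathbb R^n\to\mathbb R\cup\{+\infty\}$ proper lsc, $\arg\min\Phi\ne\emptyset$. $\gamma_i\in(0,N/L_{f_i})$, $\Gamma=\operatorname{blockdiag}(\gamma_1I_{n_1},\dots,\gamma_NI_{n_N})$, $\|x\|_V^2=\langle x,Vx\rangle$, $\operatorname{prox}_G^{V}(u)=\arg\min_w\{G(w)+\frac12\|w-u\|_V^2\}$, $\mathbf T(\bm x)=\operatorname{prox}_G^{\Gamma^{-1}}(\bm x-\Gamma\nabla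 F(\bm x))$. Forward-backward envelope: $\Phi^{\mathrm{FB}}_\Gamma(\bm x):=\inf_{\bm w}\{F(\bm x)+\langle\nabla F(\bm x),\bm w-\bm x\rangle+G(\bm w)+\frac12\|\bm w-\bm x\|^2_{\Gamma^{-1}}\}$. *)

theory Defs
  imports "HOL-Analysis.Analysis"
begin

text \<open>Block structure: the whole space R^n is modelled as real^'n; each coordinate j
belongs to the block blk j (blocks are numbered 0..N-1). The block x_i of x is
encoded by the projection blkproj blk i x, which zeroes all other coordinates.\<close>

definition blkproj :: "('n::finite \<Rightarrow> nat) \<Rightarrow> nat \<Rightarrow> real^'n \<Rightarrow> real^'n" where
  "blkproj blk i x = (\<chi> j. if blk j = i then x $ j else 0)"

text \<open>Gamma v, with Gamma = blockdiag(gamma_1 I, ..., gamma_N I).\<close>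
definition Gam :: "('n::finite \<Rightarrow> nat) \<Rightarrow> (nat \<Rightarrow> real) \<Rightarrow> real^'n \<Rightarrow> real^'n" where
  "Gam blk \<gamma> v = (\<chi> j. \<gamma> (blk j) * v $ j)"

definition normGinv2 :: "('n::finite \<Rightarrow> nat) \<Rightarrow> (nat \<Rightarrow> real) \<Rightarrow> real^'n \<Rightarrow> real" where
  "normGinv2 blk \<gamma> v = (\<Sum>j\<in>UNIV. (v $ j)^2 / \<gamma> (blk j))"

definition normGinv :: "('n::finite \<Rightarrow> nat) \<Rightarrow> (nat \<Rightarrow> real) \<Rightarrow> real^'n \<Rightarrow> real" where
  "normGinv blk \<gamma> v = sqrt (normGinv2 blk \<gamma> v)"

text \<open>Proximal map prox_G^{Gamma^{-1}}(u): the (unique, when G is proper lsc convex) minimiser.\<close>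
definition proxG :: "('n::finite \<Rightarrow> nat) \<Rightarrow> (nat \<Rightarrow> real) \<Rightarrow> (real^'n \<Rightarrow> ereal) \<Rightarrow> real^'n \<Rightarrow> real^'n" where
  "proxG blk \<gamma> G u = (THE w. \<forall>z. G w + ereal (normGinv2 blk \<gamma> (w - u) / 2)
                                  \<le> G z + ereal (normGinv2 blk \<gamma> (z - u) / 2))"

definition FBE :: "('n::finite \<Rightarrow> nat) \<Rightarrow> (nat \<Rightarrow> real) \<Rightarrow> (real^'n \<Rightarrow> real) \<Rightarrow> (real^'n \<Rightarrow> real^'n)
                   \<Rightarrow> (real^'n \<Rightarrow> ereal) \<Rightarrow> real^'n \<Rightarrow> ereal" where
  "FBE blk \<gamma> F gF G x = (INF w. ereal (F x + gF x \<bullet> (w - x)) + G w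
                                 + ereal (normGinv2 blk \<gamma> (w - x) / 2))"

definition proper_fun :: "('a \<Rightarrow> ereal) \<Rightarrow> bool" where
  "proper_fun G \<longleftrightarrow> (\<forall>x. G x \<noteq> -\<infinity>) \<and> (\<exists>x. G x \<noteq> \<infinity>)"

definition lsc_fun :: "('a::topological_space \<Rightarrow> ereal) \<Rightarrow> bool" where
  "lsc_fun G \<longleftrightarrow> (\<forall>x X. X \<longlonglongrightarrow> x \<longrightarrow> G x \<le> liminf (\<lambda>k. G (X k)))"

definition convex_fun :: "('a::real_vector \<Rightarrow> ereal) \<Rightarrow> bool" where
  "convex_fun G \<longleftrightarrow> (\<forall>x y t. 0 < t \<and> t < 1 \<longrightarrow>
       G ((1 - t) *\<^sub>R x + t *\<^sub>R y) \<le> ereal (1 - t) * G x + ereal t * G y)"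

definition frechet_subdiff :: "('a::real_inner \<Rightarrow> ereal) \<Rightarrow> 'a \<Rightarrow> 'a set" where
  "frechet_subdiff f x = {v. \<bar>f x\<bar> \<noteq> \<infinity> \<and>
     (\<forall>e>0. \<exists>d>0. \<forall>y. norm (y - x) < d \<longrightarrow>
        f y \<ge> f x + ereal (v \<bullet> (y - x) - e * norm (y - x)))}"

definition limiting_subdiff :: "('a::real_inner \<Rightarrow> ereal) \<Rightarrow> 'a \<Rightarrow> 'a set" where
  "limiting_subdiff f x = {v. \<bar>f x\<bar> \<noteq> \<infinity> \<and>
     (\<exists>X V. X \<longlonglongrightarrow> x \<and> (\<lambda>k. f (X k)) \<longlonglongrightarrow> f x \<and> V \<longlonglongrightarrow> v \<and>
            (\<forall>k. V k \<in> frechet_subdiff f (X k)))}"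

text \<open>dist(0,S) with the convention dist(0,{}) = +infinity.\<close>
definition dist0 :: "'a::real_normed_vector set \<Rightarrow> ereal" where
  "dist0 S = (INF v\<in>S. ereal (norm v))"

end

theory Submission
  imports Defs
begin

text \<open>For convex \<open>G\<close> the proximal map is nonexpansive in the metric \<open>\<parallel>\<cdot>\<parallel>\<^sub>\<Gamma>\<^sub>\<^sup>-\<^sub>\<^sup>1\<close>,
  and the forward step \<open>x - \<Gamma>\<nabla>F(x)\<close> acts block by block: on block \<open>i\<close> it is Lipschitz with constant
  at most \<open>1 + \<gamma>\<^sub>i L\<^sub>i/N < 2\<close>, and, by cocoercivity of the gradient of the convex function
  \<open>f\<^sub>i - \<mu>\<^sub>i/2 \<parallel>\<cdot>\<parallel>\<^sup>2\<close>, a contraction by the factor \<open>1 - \<gamma>\<^sub>i \<mu>\<^sub>i/N\<close> when \<open>f\<^sub>i\<close> is strongly convex.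
  This gives (b).

  For (a), the infimum defining the envelope is attained at \<open>w = T x\<close>; using that same \<open>w\<close> as a
  candidate at a nearby point \<open>z\<close> yields the one-sided estimate
  \<open>\<Phi>(z) - \<Phi>(x) \<le> C \<rho>(x) \<parallel>z - x\<parallel> + K \<parallel>z - x\<parallel>\<^sup>2\<close> with \<open>\<rho>(x) = \<parallel>x - T x\<parallel>\<^sub>\<Gamma>\<^sub>\<^sup>-\<^sub>\<^sup>1\<close>, and \<open>\<rho>\<close> is
  Lipschitz by (b). For any such function, minimising \<open>\<Phi> + M \<parallel>\<cdot> - x\<parallel>\<^sup>2\<close> on small balls produces
  points \<open>y \<rightarrow> x\<close> carrying Frechet subgradients of norm at most \<open>C \<rho>(y)\<close>; a limit of these lies in the
  limiting subdifferential at \<open>x\<close> and has norm at most \<open>C \<rho>(x)\<close>.\<close>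

lemma norm_add_scaleR_power2:
  fixes a b :: "'a::real_inner"
  shows "(norm (a + t *\<^sub>R b))\<^sup>2 = (norm a)\<^sup>2 + 2 * t * (a \<bullet> b) + t\<^sup>2 * (norm b)\<^sup>2"
  unfolding power2_norm_eq_inner
  by (simp add: inner_add_left inner_add_right inner_commute power2_eq_square algebra_simps)

lemma norm_scaleR_diff_power2:
  fixes d e :: "'a::real_inner"
  shows "(norm (c *\<^sub>R d - t *\<^sub>R e))\<^sup>2 = c\<^sup>2 * (norm d)\<^sup>2 - 2 * c * t * (d \<bullet> e) + t\<^sup>2 * (norm e)\<^sup>2"
  unfolding power2_norm_eq_inner
  by (simp add: inner_diff_left inner_diff_right inner_commute power2_eq_square algebra_simps)

lemma has_real_derivative_along_line:
  assumes "GDERIV h (x + t *\<^sub>R d) :> gr"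
  shows "((\<lambda>s. h (x + s *\<^sub>R d)) has_real_derivative (gr \<bullet> d)) (at t)"
proof -
  have "(h has_derivative (\<lambda>v. v \<bullet> gr)) (at (x + t *\<^sub>R d))"
    using assms by (simp add: gderiv_def)
  then have "((h \<circ> (\<lambda>s. x + s *\<^sub>R d)) has_derivative ((\<lambda>v. v \<bullet> gr) \<circ> (\<lambda>s. s *\<^sub>R d))) (at t)"
    by (intro diff_chain_at) (auto intro!: derivative_eq_intros)
  moreover have "((\<lambda>v. v \<bullet> gr) \<circ> (\<lambda>s. s *\<^sub>R d)) = (\<lambda>s. (gr \<bullet> d) * s)"
    by (auto simp: inner_commute)
  ultimately show ?thesis
    by (simp add: has_field_derivative_def o_def)
qed

lemma lipschitz_gradient_quadratic_bounds:
  fixes f :: "'a::real_inner \<Rightarrow> real"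
  assumes gd: "\<And>x. GDERIV f x :> g x"
    and lip: "\<And>x y. norm (g x - g y) \<le> L * norm (x - y)"
  shows "f y \<le> f x + g x \<bullet> (y - x) + L / 2 * (norm (y - x))\<^sup>2"
    and "f y \<ge> f x + g x \<bullet> (y - x) - L / 2 * (norm (y - x))\<^sup>2"
proof -
  define d where "d = y - x"
  have y: "y = x + 1 *\<^sub>R d" by (simp add: d_def)
  have D: "((\<lambda>s. f (x + s *\<^sub>R d)) has_real_derivative (g (x + t *\<^sub>R d) \<bullet> d)) (at t)" for t
    using has_real_derivative_along_line gd by blast
  have gb: "\<bar>(g (x + t *\<^sub>R d) - g x) \<bullet> d\<bar> \<le> L * t * (norm d)\<^sup>2" if "0 \<le> t" for t
  proof -
    have "\<bar>(g (x + t *\<^sub>R d) - g x) \<bullet> d\<bar> \<le> norm (g (x + t *\<^sub>R d) - g x) * norm d"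
      by (rule Cauchy_Schwarz_ineq2)
    also have "\<dots> \<le> L * norm (t *\<^sub>R d) * norm d"
      using lip by (metis add_diff_cancel_left' mult_right_mono norm_ge_zero)
    finally show ?thesis using that by (simp add: power2_eq_square mult_ac)
  qed
  let ?p = "\<lambda>s. f (x + s *\<^sub>R d) - s * (g x \<bullet> d) - L / 2 * s\<^sup>2 * (norm d)\<^sup>2"
  have "?p 1 \<le> ?p 0"
  proof (rule DERIV_nonpos_imp_nonincreasing[of 0 1])
    fix t :: real assume t: "0 \<le> t" "t \<le> 1"
    have "(?p has_real_derivative (g (x + t *\<^sub>R d) \<bullet> d - g x \<bullet> d - L * t * (norm d)\<^sup>2)) (at t)"
      by (rule derivative_eq_intros D refl | simp)+
    moreover have "g (x + t *\<^sub>R d) \<bullet> d - g x \<bullet> d - L * t * (norm d)\<^sup>2 \<le> 0"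
      using gb[OF t(1)] by (simp add: inner_diff_left)
    ultimately show "\<exists>y. (?p has_real_derivative y) (at t) \<and> y \<le> 0" by blast
  qed simp
  then show "f y \<le> f x + g x \<bullet> (y - x) + L / 2 * (norm (y - x))\<^sup>2"
    by (simp add: d_def[symmetric] y)
  let ?q = "\<lambda>s. f (x + s *\<^sub>R d) - s * (g x \<bullet> d) + L / 2 * s\<^sup>2 * (norm d)\<^sup>2"
  have "?q 0 \<le> ?q 1"
  proof (rule DERIV_nonneg_imp_nondecreasing[of 0 1])
    fix t :: real assume t: "0 \<le> t" "t \<le> 1"
    have "(?q has_real_derivative (g (x + t *\<^sub>R d) \<bullet> d - g x \<bullet> d + L * t * (norm d)\<^sup>2)) (at t)"
      by (rule derivative_eq_intros D refl | simp)+
    moreover have "g (x + t *\<^sub>R d) \<bullet> d - g x \<bullet> d + L * t * (norm d)\<^sup>2 \<ge> 0"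
      using gb[OF t(1)] by (simp add: inner_diff_left)
    ultimately show "\<exists>y. (?q has_real_derivative y) (at t) \<and> y \<ge> 0" by blast
  qed simp
  then show "f y \<ge> f x + g x \<bullet> (y - x) - L / 2 * (norm (y - x))\<^sup>2"
    by (simp add: d_def[symmetric] y)
qed

lemma strongly_convex_gradient_lower_bound:
  fixes f :: "'a::real_inner \<Rightarrow> real" and P :: "'a \<Rightarrow> 'b::real_inner"
  assumes P: "linear P" and gd: "\<And>y. GDERIV f y :> g y"
    and cv: "convex_on UNIV (\<lambda>y. f y - \<mu> / 2 * (norm (P y))\<^sup>2)"
  shows "f z \<ge> f x + g x \<bullet> (z - x) + \<mu> / 2 * (norm (P (z - x)))\<^sup>2"
proof -
  define d where "d = z - x"
  define A where "A = (norm (P x))\<^sup>2"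
  define B where "B = P x \<bullet> P d"
  define C where "C = (norm (P d))\<^sup>2"
  define \<psi> where "\<psi> = (\<lambda>t. f (x + t *\<^sub>R d) - \<mu> / 2 * (A + 2 * t * B + t\<^sup>2 * C))"
  have \<psi>_eq: "\<psi> t = f (x + t *\<^sub>R d) - \<mu> / 2 * (norm (P (x + t *\<^sub>R d)))\<^sup>2" for t
    unfolding \<psi>_def A_def B_def C_def linear_add[OF P] linear_scale[OF P] norm_add_scaleR_power2 ..
  have "convex_on UNIV \<psi>"
  proof (rule convex_onI)
    fix s a b :: real assume s: "0 < s" "s < 1"
    have "x + ((1 - s) *\<^sub>R a + s *\<^sub>R b) *\<^sub>R d = (1 - s) *\<^sub>R (x + a *\<^sub>R d) + s *\<^sub>R (x + b *\<^sub>R d)"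
      by (simp add: algebra_simps)
    then show "\<psi> ((1 - s) *\<^sub>R a + s *\<^sub>R b) \<le> (1 - s) * \<psi> a + s * \<psi> b"
      unfolding \<psi>_eq using convex_onD[OF cv, of s "x + a *\<^sub>R d" "x + b *\<^sub>R d"] s by simp
  qed simp
  moreover have "(\<psi> has_real_derivative (g x \<bullet> d - \<mu> * B)) (at 0)"
  proof -
    have "((\<lambda>t. f (x + t *\<^sub>R d)) has_real_derivative (g (x + 0 *\<^sub>R d) \<bullet> d)) (at 0)"
      by (rule has_real_derivative_along_line) (rule gd)
    then show ?thesis
      unfolding \<psi>_def by (auto intro!: derivative_eq_intros)
  qed
  ultimately have "(g x \<bullet> d - \<mu> * B) * (1 - 0) \<le> \<psi> 1 - \<psi> 0"
    by (intro convex_on_imp_above_tangent) (auto simp: has_field_derivative_at_within)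
  then show ?thesis
    unfolding \<psi>_def C_def d_def by (simp add: algebra_simps)
qed

lemma quadratic_bounded_below:
  fixes k :: real
  assumes "k > 0"
  shows "c - b\<^sup>2 / (4 * k) \<le> c - b * t + k * t\<^sup>2"
proof -
  have "0 \<le> k * (t - b / (2 * k))\<^sup>2" using assms by simp
  also have "k * (t - b / (2 * k))\<^sup>2 = k * t\<^sup>2 - b * t + b\<^sup>2 / (4 * k)"
    using assms by (simp add: power2_eq_square field_simps)
  finally show ?thesis by simp
qed

lemma quadratic_sublevel_bounded:
  fixes k t :: real
  assumes k: "k > 0" and le: "c - b * t + k * t\<^sup>2 \<le> a"
  shows "t \<le> max 1 ((\<bar>b\<bar> + \<bar>a - c\<bar>) / k)"
proof (rule ccontr)
  assume "\<not> ?thesis"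
  then have t1: "1 < t" and t2: "(\<bar>b\<bar> + \<bar>a - c\<bar>) / k < t" by auto
  have "b * t \<le> \<bar>b\<bar> * t" and "a - c \<le> \<bar>a - c\<bar> * t"
    using t1 by (auto intro: mult_right_mono order_trans[OF abs_ge_self] simp: mult_le_cancel_left1)
  with le have "(k * t) * t \<le> (\<bar>b\<bar> + \<bar>a - c\<bar>) * t"
    by (simp add: power2_eq_square algebra_simps)
  then have "k * t \<le> \<bar>b\<bar> + \<bar>a - c\<bar>" using t1 by simp
  then show False using t2 k by (simp add: pos_divide_less_eq mult.commute)
qed

lemma lsc_attains_min_if_quadratic_minorant:
  fixes h :: "'a::{real_normed_vector,heine_borel} \<Rightarrow> ereal"
  assumes lsc: "lsc_fun h" and fin: "h z0 < \<infinity>" and k: "k > 0"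
    and minorant: "\<And>w. ereal (c - b * norm (w - u) + k * (norm (w - u))\<^sup>2) \<le> h w"
  shows "\<exists>p. \<forall>z. h p \<le> h z"
proof -
  define m where "m = (INF w. h w)"
  have "ereal (c - b\<^sup>2 / (4 * k)) \<le> m"
    unfolding m_def
    by (rule INF_greatest) (meson minorant quadratic_bounded_below[OF k] ereal_less_eq(3) order_trans)
  moreover have "m < \<infinity>" unfolding m_def using fin by (meson INF_lower UNIV_I le_less_trans)
  ultimately obtain mr where mr: "m = ereal mr" by (cases m) auto
  have "\<exists>w. h w < ereal (mr + 1 / (real n + 1))" for n :: nat
  proof -
    have "m < ereal (mr + 1 / (real n + 1))" using mr by simp
    then show ?thesis unfolding m_def by (simp add: INF_less_iff)
  qed
  then obtain W where W: "\<And>n. h (W n) < ereal (mr + 1 / (real n + 1))" by metis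
  have "norm (W n - u) \<le> max 1 ((\<bar>b\<bar> + \<bar>mr + 1 - c\<bar>) / k)" for n
  proof (rule quadratic_sublevel_bounded[OF k])
    have "1 / (real n + 1) \<le> 1" by (simp add: divide_le_eq_1)
    moreover have "c - b * norm (W n - u) + k * (norm (W n - u))\<^sup>2 < mr + 1 / (real n + 1)"
      using le_less_trans[OF minorant W] by simp
    ultimately show "c - b * norm (W n - u) + k * (norm (W n - u))\<^sup>2 \<le> mr + 1" by linarith
  qed
  then have "bounded (range W)"
    unfolding bounded_iff by (metis (no_types) norm_triangle_sub add.commute add_right_mono order_trans rangeE)
  then obtain l r where r: "strict_mono r" and lim: "(W \<circ> r) \<longlonglongrightarrow> l"
    using bounded_imp_convergent_subsequence by blast
  have "h l \<le> liminf (\<lambda>n. h ((W \<circ> r) n))"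
    using lsc lim unfolding lsc_fun_def by blast
  also have "\<dots> \<le> liminf (\<lambda>n. ereal (mr + 1 / (real n + 1)))"
  proof (rule Liminf_mono, rule always_eventually, rule allI)
    fix n
    have "1 / (real (r n) + 1) \<le> 1 / (real n + 1)"
      using seq_suble[OF r, of n] by (intro divide_left_mono) auto
    then show "h ((W \<circ> r) n) \<le> ereal (mr + 1 / (real n + 1))"
      using W[of "r n"] by (simp add: o_def) (meson ereal_less_eq(3) add_left_mono less_imp_le order_trans)
  qed
  also have "\<dots> = ereal mr"
  proof (rule lim_imp_Liminf)
    have "(\<lambda>n. 1 / (real n + 1)) \<longlonglongrightarrow> 0"
      using LIMSEQ_inverse_real_of_nat by (simp add: inverse_eq_divide add.commute)
    then show "(\<lambda>n. ereal (mr + 1 / (real n + 1))) \<longlonglongrightarrow> ereal mr"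
      by (intro tendsto_ereal) (auto intro: tendsto_eq_intros)
  qed simp
  finally have "h l \<le> m" using mr by simp
  then show ?thesis unfolding m_def by (meson INF_lower UNIV_I order_trans)
qed

section \<open>Proximal points of convex functions\<close>

definition prox_point :: "('a::real_vector \<Rightarrow> 'b::real_inner) \<Rightarrow> ('a \<Rightarrow> ereal) \<Rightarrow> 'a \<Rightarrow> 'a \<Rightarrow> bool" where
  "prox_point A G u p \<longleftrightarrow>
     (\<forall>z. G p + ereal ((norm (A (p - u)))\<^sup>2 / 2) \<le> G z + ereal ((norm (A (z - u)))\<^sup>2 / 2))"

lemma prox_point_finite:
  assumes "proper_fun G" and "prox_point A G u p"
  shows "\<exists>r. G p = ereal r"
proof -
  obtain z where "G z \<noteq> \<infinity>" using assms(1) unfolding proper_fun_def by blast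
  then have "G z + ereal ((norm (A (z - u)))\<^sup>2 / 2) < \<infinity>" by simp
  with assms(2) have "G p \<noteq> \<infinity>" unfolding prox_point_def
    by (metis ereal_plus_eq_PInfty leD order_refl)
  moreover have "G p \<noteq> -\<infinity>" using assms(1) unfolding proper_fun_def by blast
  ultimately show ?thesis by (cases "G p") auto
qed

lemma prox_point_variational_inequality:
  assumes A: "linear A" and G: "convex_fun G" and pm: "prox_point A G u p"
    and gp: "G p = ereal gp" and gz: "G z = ereal gz"
  shows "gp + A (u - p) \<bullet> A (z - p) \<le> gz"
proof -
  define a where "a = A (p - u)"
  define b where "b = A (z - p)"
  have key: "0 \<le> gz - gp + a \<bullet> b + t / 2 * (norm b)\<^sup>2" if t: "0 < t" "t < 1" for t
  proof -
    define zt where "zt = (1 - t) *\<^sub>R p + t *\<^sub>R z"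
    have "G zt \<le> ereal (1 - t) * G p + ereal t * G z"
      unfolding zt_def using G t unfolding convex_fun_def by blast
    then have Gzt: "G zt \<le> ereal ((1 - t) * gp + t * gz)" using gp gz by simp
    have "zt - u = (p - u) + t *\<^sub>R (z - p)" unfolding zt_def by (simp add: algebra_simps)
    then have "A (zt - u) = a + t *\<^sub>R b"
      unfolding a_def b_def by (simp only: linear_add[OF A] linear_scale[OF A])
    then have nzt: "(norm (A (zt - u)))\<^sup>2 = (norm a)\<^sup>2 + 2 * t * (a \<bullet> b) + t\<^sup>2 * (norm b)\<^sup>2"
      by (simp only: norm_add_scaleR_power2)
    have "G p + ereal ((norm a)\<^sup>2 / 2) \<le> G zt + ereal ((norm (A (zt - u)))\<^sup>2 / 2)"
      using pm unfolding prox_point_def a_def by blast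
    also have "\<dots> \<le> ereal ((1 - t) * gp + t * gz) + ereal ((norm (A (zt - u)))\<^sup>2 / 2)"
      by (rule add_right_mono[OF Gzt])
    finally have "gp + (norm a)\<^sup>2 / 2 \<le> (1 - t) * gp + t * gz + ((norm a)\<^sup>2 + 2 * t * (a \<bullet> b) + t\<^sup>2 * (norm b)\<^sup>2) / 2"
      using gp nzt by simp
    then have "t * 0 \<le> t * (gz - gp + a \<bullet> b + t / 2 * (norm b)\<^sup>2)"
      by (simp add: algebra_simps power2_eq_square add_divide_distrib)
    then show ?thesis using t by (simp add: zero_le_mult_iff)
  qed
  have "0 \<le> gz - gp + a \<bullet> b"
  proof (rule field_le_epsilon)
    fix e :: real assume e: "0 < e"
    define t where "t = min (1/2) (e / ((norm b)\<^sup>2 + 1))"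
    have nb: "0 < (norm b)\<^sup>2 + 1" by (simp add: add_nonneg_pos)
    then have t: "0 < t" "t < 1" unfolding t_def using e by auto
    have "t \<le> e / ((norm b)\<^sup>2 + 1)" unfolding t_def by simp
    then have "t * ((norm b)\<^sup>2 + 1) \<le> e" using nb by (simp add: pos_le_divide_eq)
    moreover have "t / 2 * (norm b)\<^sup>2 \<le> t * (norm b)\<^sup>2" using t by (intro mult_right_mono) simp_all
    ultimately have "t / 2 * (norm b)\<^sup>2 \<le> e" using t e by (simp add: distrib_left)
    then show "0 \<le> gz - gp + a \<bullet> b + e" using key[OF t] by linarith
  qed
  moreover have "A (u - p) = - a" unfolding a_def by (metis A linear_diff minus_diff_eq)
  ultimately show ?thesis unfolding b_def by simp
qed

lemma prox_point_nonexpansive: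
  assumes A: "linear A" and G: "proper_fun G" "convex_fun G"
    and p1: "prox_point A G u1 p1" and p2: "prox_point A G u2 p2"
  shows "norm (A (p1 - p2)) \<le> norm (A (u1 - u2))"
proof -
  obtain g1 g2 where g1: "G p1 = ereal g1" and g2: "G p2 = ereal g2"
    using prox_point_finite[OF G(1)] p1 p2 by metis
  have "g1 + A (u1 - p1) \<bullet> A (p2 - p1) \<le> g2"
    by (rule prox_point_variational_inequality[OF A G(2) p1 g1 g2])
  moreover have "g2 + A (u2 - p2) \<bullet> A (p1 - p2) \<le> g1"
    by (rule prox_point_variational_inequality[OF A G(2) p2 g2 g1])
  ultimately have "A (p1 - p2) \<bullet> A (p1 - p2) \<le> A (u1 - u2) \<bullet> A (p1 - p2)"
    by (simp add: linear_diff[OF A] inner_diff_left inner_diff_right inner_commute)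
  also have "\<dots> \<le> norm (A (u1 - u2)) * norm (A (p1 - p2))"
    by (rule norm_cauchy_schwarz)
  finally have "norm (A (p1 - p2)) * norm (A (p1 - p2)) \<le> norm (A (u1 - u2)) * norm (A (p1 - p2))"
    by (simp add: power2_norm_eq_inner[symmetric] power2_eq_square)
  then show ?thesis
    by (metis mult_right_le_imp_le norm_ge_zero order.not_eq_order_implies_strict
        zero_less_norm_iff order_refl mult_zero_right)
qed

lemma prox_point_unique:
  assumes A: "linear A" "inj A" and G: "proper_fun G" "convex_fun G"
    and "prox_point A G u p1" and "prox_point A G u p2"
  shows "p1 = p2"
proof -
  have "A (p1 - p2) = 0" using prox_point_nonexpansive[OF A(1) G assms(5,6)] linear_0[OF A(1)] by simp
  then show ?thesis using A linear_injective_0[OF A(1)] by (metis right_minus_eq)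
qed

section \<open>Small limiting subgradients from a one-sided quadratic estimate\<close>

lemma proximal_subgradient_in_frechet_subdiff:
  fixes h :: "'a::real_inner \<Rightarrow> real"
  assumes r: "r > 0" and M: "M > 0"
    and prox: "\<And>y. norm (y - p) < r \<Longrightarrow> h p + v \<bullet> (y - p) - M * (norm (y - p))\<^sup>2 \<le> h y"
  shows "v \<in> frechet_subdiff (\<lambda>y. ereal (h y)) p"
  unfolding frechet_subdiff_def
proof (intro CollectI conjI allI impI)
  fix e :: real assume e: "e > 0"
  have "h p + (v \<bullet> (y - p) - e * norm (y - p)) \<le> h y" if y: "norm (y - p) < min r (e / M)" for y
  proof -
    have "M * norm (y - p) \<le> e" using y M by (simp add: field_simps)
    then have "M * (norm (y - p))\<^sup>2 \<le> e * norm (y - p)"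
      by (simp add: power2_eq_square mult.assoc[symmetric] mult_right_mono)
    then show ?thesis using prox[of y] y by simp
  qed
  moreover have "min r (e / M) > 0" using r e M by simp
  ultimately show "\<exists>d>0. \<forall>y. norm (y - p) < d \<longrightarrow> ereal (h y) \<ge> ereal (h p) + ereal (v \<bullet> (y - p) - e * norm (y - p))"
    by (intro exI[of _ "min r (e / M)"]) auto
qed simp

lemma proximal_subgradient_norm_le:
  fixes h :: "'a::real_inner \<Rightarrow> real"
  assumes r: "r > 0" and c: "0 \<le> c"
    and prox: "\<And>y. norm (y - p) < r \<Longrightarrow> h p + v \<bullet> (y - p) - M * (norm (y - p))\<^sup>2 \<le> h y"
    and upper: "\<And>y. h y - h p \<le> c * norm (y - p) + K * (norm (y - p))\<^sup>2"
  shows "norm v \<le> c"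
proof (cases "v = 0")
  case False
  have "norm v \<le> c + (M + K) * s" if s: "0 < s" "s < r" for s
  proof -
    define y where "y = p + (s / norm v) *\<^sub>R v"
    have ny: "norm (y - p) = s" unfolding y_def using s False by simp
    have "v \<bullet> (y - p) = s * norm v"
      unfolding y_def using False by (simp add: power2_norm_eq_inner[symmetric] power2_eq_square)
    then have "s * norm v \<le> s * (c + (M + K) * s)"
      using prox[of y] upper[of y] ny s by (simp add: power2_eq_square algebra_simps)
    then show ?thesis using s by simp
  qed
  then have "\<forall>\<^sub>F s in at_right 0. norm v \<le> c + (M + K) * s"
    using eventually_at_right_real[OF r] by (auto elim: eventually_mono)
  moreover have "((\<lambda>s. c + (M + K) * s) \<longlongrightarrow> c) (at_right 0)"
    by (auto intro!: tendsto_eq_intros)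
  ultimately show ?thesis
    by (intro tendsto_le[OF trivial_limit_at_right_real _ tendsto_const]) auto
qed (use c in simp)

locale quadratic_upper_estimate =
  fixes h :: "'a::euclidean_space \<Rightarrow> real" and c :: "'a \<Rightarrow> real" and K \<Lambda> :: real
  assumes upper: "\<And>x z. h z - h x \<le> c x * norm (z - x) + K * (norm (z - x))\<^sup>2"
    and c_nonneg: "\<And>x. 0 \<le> c x"
    and c_lipschitz: "\<And>x z. c z \<le> c x + \<Lambda> * norm (z - x)"
    and K_nonneg: "0 \<le> K" and \<Lambda>_nonneg: "0 \<le> \<Lambda>"
begin

lemma two_sided_estimate: "\<bar>h z - h x\<bar> \<le> c x * norm (z - x) + (K + \<Lambda>) * (norm (z - x))\<^sup>2"
proof -
  have "h x - h z \<le> c z * norm (z - x) + K * (norm (z - x))\<^sup>2"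
    using upper[where x = z and z = x] by (simp only: norm_minus_commute)
  also have "c z * norm (z - x) \<le> (c x + \<Lambda> * norm (z - x)) * norm (z - x)"
    by (intro mult_right_mono c_lipschitz) simp
  also have "(c x + \<Lambda> * norm (z - x)) * norm (z - x) + K * (norm (z - x))\<^sup>2
      = c x * norm (z - x) + (K + \<Lambda>) * (norm (z - x))\<^sup>2"
    by (simp add: power2_eq_square algebra_simps)
  finally have "h x - h z \<le> c x * norm (z - x) + (K + \<Lambda>) * (norm (z - x))\<^sup>2" by simp
  moreover have "h z - h x \<le> c x * norm (z - x) + (K + \<Lambda>) * (norm (z - x))\<^sup>2"
    using upper[where x = x and z = z] mult_nonneg_nonneg[OF \<Lambda>_nonneg zero_le_power2[of "norm (z - x)"]]
    by (simp add: distrib_right)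
  ultimately show ?thesis by linarith
qed

lemma isCont: "isCont h x"
proof -
  have "((\<lambda>z. norm (z - x)) \<longlongrightarrow> 0) (at x)"
    by (intro tendsto_norm_zero LIM_zero tendsto_ident_at)
  then have "((\<lambda>z. c x * norm (z - x) + (K + \<Lambda>) * (norm (z - x))\<^sup>2) \<longlongrightarrow> 0) (at x)"
    by (auto intro!: tendsto_eq_intros)
  then have "((\<lambda>z. h z - h x) \<longlongrightarrow> 0) (at x)"
    by (rule Lim_null_comparison[rotated]) (simp add: two_sided_estimate)
  then show ?thesis unfolding isCont_def by (rule LIM_zero_cancel)
qed

text \<open>Minimising \<open>h + M \<parallel>\<cdot> - x\<parallel>\<^sup>2\<close> over a small ball around \<open>x\<close> produces, for \<open>M\<close> large,
  an interior minimiser \<open>y\<close>; there \<open>2 M (x - y)\<close> is a proximal subgradient of \<open>h\<close>.\<close>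

lemma exists_proximal_subgradient_near:
  assumes \<rho>: "\<rho> > 0"
  obtains y r M where "norm (y - x) < \<rho>" "r > 0" "M > 0"
    "\<And>z. norm (z - y) < r \<Longrightarrow> h y + (2 * M) *\<^sub>R (x - y) \<bullet> (z - y) - M * (norm (z - y))\<^sup>2 \<le> h z"
proof -
  define M where "M = K + \<Lambda> + 2 * c x / \<rho> + 1"
  have M: "M \<ge> 1" unfolding M_def using K_nonneg \<Lambda>_nonneg c_nonneg[of x] \<rho> by simp
  define \<psi> where "\<psi> = (\<lambda>y. h y + M * (norm (y - x))\<^sup>2)"
  have "continuous_on (cball x \<rho>) \<psi>"
    unfolding \<psi>_def by (intro continuous_at_imp_continuous_on ballI continuous_intros isCont)
  moreover have "cball x \<rho> \<noteq> {}" using \<rho> by simp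
  ultimately have "\<exists>y\<in>cball x \<rho>. \<forall>z\<in>cball x \<rho>. \<psi> y \<le> \<psi> z"
    using continuous_attains_inf[OF compact_cball] by blast
  then obtain y where y: "y \<in> cball x \<rho>" and ymin: "\<And>z. z \<in> cball x \<rho> \<Longrightarrow> \<psi> y \<le> \<psi> z"
    by blast
  define d where "d = norm (y - x)"
  have dle: "d \<le> \<rho>" using y unfolding d_def mem_cball dist_norm by (simp add: norm_minus_commute)
  have dlt: "d < \<rho>"
  proof (rule ccontr)
    assume "\<not> d < \<rho>"
    then have dd: "d = \<rho>" using dle by simp
    have "h y + M * d\<^sup>2 \<le> h x" using ymin[of x] \<rho> unfolding \<psi>_def d_def by simp
    moreover have "\<bar>h y - h x\<bar> \<le> c x * d + (K + \<Lambda>) * d\<^sup>2"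
      unfolding d_def by (rule two_sided_estimate)
    moreover have "M * d\<^sup>2 = (K + \<Lambda>) * d\<^sup>2 + 2 * c x * d + d\<^sup>2"
      unfolding M_def dd using \<rho> by (simp add: power2_eq_square field_simps)
    ultimately have "c x * d + d\<^sup>2 \<le> 0" by linarith
    moreover have "0 \<le> c x * d" using c_nonneg dle dd \<rho> by simp
    moreover have "0 < d\<^sup>2" using dd \<rho> by simp
    ultimately show False by linarith
  qed
  have "h y + (2 * M) *\<^sub>R (x - y) \<bullet> (z - y) - M * (norm (z - y))\<^sup>2 \<le> h z"
    if z: "norm (z - y) < \<rho> - d" for z
  proof -
    have "norm (z - x) \<le> norm (z - y) + d"
      unfolding d_def using norm_triangle_ineq[of "z - y" "y - x"] by simp
    then have "z \<in> cball x \<rho>" using z unfolding mem_cball dist_norm by (simp add: norm_minus_commute)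
    then have "h y + M * d\<^sup>2 \<le> h z + M * (norm (z - x))\<^sup>2"
      using ymin unfolding \<psi>_def d_def by blast
    moreover have "(norm (z - x))\<^sup>2 = (norm (z - y))\<^sup>2 + 2 * ((z - y) \<bullet> (y - x)) + d\<^sup>2"
      using norm_add_scaleR_power2[of "z - y" 1 "y - x"] unfolding d_def by simp
    ultimately show ?thesis
      by (simp add: inner_commute inner_diff_left inner_diff_right algebra_simps)
  qed
  then show ?thesis using that[of y "\<rho> - d" M] dlt M unfolding d_def by simp
qed

lemma exists_frechet_subgradient_near:
  assumes "\<rho> > 0"
  obtains y v where "norm (y - x) < \<rho>" "v \<in> frechet_subdiff (\<lambda>y. ereal (h y)) y" "norm v \<le> c y"
proof (rule exists_proximal_subgradient_near[where x = x, OF assms])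
  fix y r M assume y: "norm (y - x) < \<rho>" "r > 0" "M > 0"
    and prox: "\<And>z. norm (z - y) < r \<Longrightarrow> h y + (2 * M) *\<^sub>R (x - y) \<bullet> (z - y) - M * (norm (z - y))\<^sup>2 \<le> h z"
  show thesis
  proof (rule that[OF y(1)])
    show "(2 * M) *\<^sub>R (x - y) \<in> frechet_subdiff (\<lambda>y. ereal (h y)) y"
      by (rule proximal_subgradient_in_frechet_subdiff[OF y(2,3) prox])
    show "norm ((2 * M) *\<^sub>R (x - y)) \<le> c y"
      by (rule proximal_subgradient_norm_le[OF y(2) c_nonneg prox upper])
  qed
qed

lemma dist0_limiting_subdiff_le: "dist0 (limiting_subdiff (\<lambda>y. ereal (h y)) x) \<le> ereal (c x)"
proof -
  define e where "e = (\<lambda>k::nat. 1 / (real k + 1))"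
  have e_lim: "e \<longlonglongrightarrow> 0"
    unfolding e_def using LIMSEQ_inverse_real_of_nat by (simp add: inverse_eq_divide add.commute)
  have "\<exists>y v. norm (y - x) < e k \<and> v \<in> frechet_subdiff (\<lambda>y. ereal (h y)) y \<and> norm v \<le> c y" for k
    by (rule exists_frechet_subgradient_near[of "e k"]) (auto simp: e_def)
  then obtain Y V where Y: "\<And>k. norm (Y k - x) < e k"
    and V: "\<And>k. V k \<in> frechet_subdiff (\<lambda>y. ereal (h y)) (Y k)" "\<And>k. norm (V k) \<le> c (Y k)"
    by metis
  have V_le: "norm (V k) \<le> c x + \<Lambda> * e k" for k
  proof -
    have "norm (V k) \<le> c x + \<Lambda> * norm (Y k - x)"
      using V(2)[of k] c_lipschitz[where x = x and z = "Y k"] by linarith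
    also have "\<dots> \<le> c x + \<Lambda> * e k"
      using Y[of k] \<Lambda>_nonneg by (simp add: mult_left_mono)
    finally show ?thesis .
  qed
  have Y_lim: "Y \<longlonglongrightarrow> x"
    by (rule LIM_zero_cancel, rule Lim_null_comparison[OF _ e_lim]) (use Y in \<open>auto intro: always_eventually less_imp_le\<close>)
  have e_le: "e k \<le> 1" for k unfolding e_def by (simp add: divide_le_eq_1)
  have "norm (V k) \<le> c x + \<Lambda>" for k
    using V_le[of k] mult_left_le[OF e_le[of k] \<Lambda>_nonneg] by linarith
  then have "bounded (range V)" unfolding bounded_iff by blast
  then obtain v r where r: "strict_mono r" and Vr: "(V \<circ> r) \<longlonglongrightarrow> v"
    using bounded_imp_convergent_subsequence by blast
  have Yr: "(Y \<circ> r) \<longlonglongrightarrow> x" by (rule LIMSEQ_subseq_LIMSEQ[OF Y_lim r])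
  have "v \<in> limiting_subdiff (\<lambda>y. ereal (h y)) x"
    unfolding limiting_subdiff_def
  proof (intro CollectI conjI exI)
    show "(\<lambda>k. ereal (h ((Y \<circ> r) k))) \<longlonglongrightarrow> ereal (h x)"
      by (intro tendsto_ereal isCont_tendsto_compose[OF isCont Yr])
    show "\<forall>k. (V \<circ> r) k \<in> frechet_subdiff (\<lambda>y. ereal (h y)) ((Y \<circ> r) k)" using V(1) by simp
  qed (use Yr Vr in \<open>auto simp: o_def\<close>)
  moreover have "norm v \<le> c x"
  proof (rule tendsto_le[OF trivial_limit_sequentially])
    show "(\<lambda>k. c x + \<Lambda> * (e \<circ> r) k) \<longlonglongrightarrow> c x"
      using LIMSEQ_subseq_LIMSEQ[OF e_lim r] by (auto simp: o_def intro!: tendsto_eq_intros)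
    show "(\<lambda>k. norm ((V \<circ> r) k)) \<longlonglongrightarrow> norm v" by (rule tendsto_norm[OF Vr])
    show "\<forall>\<^sub>F k in sequentially. norm ((V \<circ> r) k) \<le> c x + \<Lambda> * (e \<circ> r) k"
      using V_le by simp
  qed
  ultimately show ?thesis
    unfolding dist0_def by (meson INF_lower ereal_less_eq(3) order_trans)
qed

end

section \<open>Block coordinates\<close>

lemma blkproj_nth [simp]: "blkproj blk i x $ j = (if blk j = i then x $ j else 0)"
  by (simp add: blkproj_def)

lemma linear_blkproj: "linear (blkproj blk i)"
  by (rule linearI) (simp_all add: vec_eq_iff)

lemmas blkproj_add = linear_add[OF linear_blkproj]
   and blkproj_diff = linear_diff[OF linear_blkproj]
   and blkproj_scaleR = linear_scale[OF linear_blkproj]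
   and blkproj_sum = linear_sum[OF linear_blkproj]

lemma blkproj_blkproj [simp]: "blkproj blk i (blkproj blk i x) = blkproj blk i x"
  by (simp add: vec_eq_iff)

lemma blkproj_blkproj_other: "k \<noteq> i \<Longrightarrow> blkproj blk k (blkproj blk i x) = 0"
  by (simp add: vec_eq_iff)

lemma inner_blkproj_left: "blkproj blk i x \<bullet> y = x \<bullet> blkproj blk i y"
  unfolding inner_vec_def by (rule sum.cong) auto

lemma norm_power2_blocks:
  assumes "\<forall>j. blk j < N"
  shows "(norm (v::real^'n::finite))\<^sup>2 = (\<Sum>i<N. (norm (blkproj blk i v))\<^sup>2)"
proof -
  have sq: "(norm (w::real^'n))\<^sup>2 = (\<Sum>j\<in>UNIV. (w $ j)\<^sup>2)" for w
    unfolding power2_norm_eq_inner inner_vec_def by (simp add: power2_eq_square)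
  have "(\<Sum>i<N. \<Sum>j\<in>{j\<in>UNIV. blk j = i}. (v $ j)\<^sup>2) = (\<Sum>j\<in>UNIV. (v $ j)\<^sup>2)"
    by (rule sum.group) (use assms in auto)
  moreover have "(norm (blkproj blk i v))\<^sup>2 = (\<Sum>j\<in>{j\<in>UNIV. blk j = i}. (v $ j)\<^sup>2)" for i
  proof -
    have "(norm (blkproj blk i v))\<^sup>2 = (\<Sum>j\<in>UNIV. if blk j = i then (v $ j)\<^sup>2 else 0)"
      unfolding sq by (rule sum.cong) auto
    also have "\<dots> = (\<Sum>j\<in>{j\<in>UNIV. blk j = i}. (v $ j)\<^sup>2)"
      by (rule sum.inter_filter[symmetric]) simp
    finally show ?thesis .
  qed
  ultimately show ?thesis unfolding sq by simp
qed

text \<open>The scaling \<open>\<Gamma>\<^sup>-\<^sup>1\<^sup>/\<^sup>2\<close> turns \<open>\<parallel>\<cdot>\<parallel>\<^sub>\<Gamma>\<^sub>\<^sup>-\<^sub>\<^sup>1\<close> into the Euclidean norm, so that the facts on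
  proximal points with respect to a linear map apply.\<close>

definition Ginv_sqrt :: "('n::finite \<Rightarrow> nat) \<Rightarrow> (nat \<Rightarrow> real) \<Rightarrow> real^'n \<Rightarrow> real^'n" where
  "Ginv_sqrt blk \<gamma> v = (\<chi> j. v $ j / sqrt (\<gamma> (blk j)))"

lemma Ginv_sqrt_nth [simp]: "Ginv_sqrt blk \<gamma> v $ j = v $ j / sqrt (\<gamma> (blk j))"
  by (simp add: Ginv_sqrt_def)

lemma linear_Ginv_sqrt: "linear (Ginv_sqrt blk \<gamma>)"
  by (rule linearI) (simp_all add: vec_eq_iff add_divide_distrib)

lemmas Ginv_sqrt_add = linear_add[OF linear_Ginv_sqrt]
   and Ginv_sqrt_diff = linear_diff[OF linear_Ginv_sqrt]
   and Ginv_sqrt_minus = linear_neg[OF linear_Ginv_sqrt]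

section \<open>The forward-backward setting\<close>

locale forward_backward =
  fixes N :: nat and blk :: "'n::finite \<Rightarrow> nat"
    and f :: "nat \<Rightarrow> real^'n \<Rightarrow> real" and g :: "nat \<Rightarrow> real^'n \<Rightarrow> real^'n"
    and L :: "nat \<Rightarrow> real" and \<gamma> :: "nat \<Rightarrow> real" and G :: "real^'n \<Rightarrow> ereal"
  assumes N_pos: "N \<ge> 1"
    and blk_range: "\<forall>j. blk j < N"
    and blk_nonempty: "\<forall>i<N. \<exists>j. blk j = i"
    and f_block: "\<forall>i<N. \<forall>x y. blkproj blk i x = blkproj blk i y \<longrightarrow> f i x = f i y"
    and f_grad: "\<forall>i<N. \<forall>x. GDERIV (f i) x :> g i x"
    and L_nonneg: "\<forall>i<N. L i \<ge> 0"
    and g_lip: "\<forall>i<N. \<forall>x y. norm (g i x - g i y) \<le> L i * norm (x - y)"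
    and \<gamma>_pos: "\<forall>i<N. \<gamma> i > 0"
    and \<gamma>_bound: "\<forall>i<N. \<gamma> i * L i < real N"
    and G_proper: "proper_fun G"
    and G_lsc: "lsc_fun G"
    and G_convex: "convex_fun G"
    and argmin: "\<exists>x. \<forall>y. ereal ((\<Sum>i<N. f i x) / real N) + G x
                         \<le> ereal ((\<Sum>i<N. f i y) / real N) + G y"
begin

abbreviation P where "P i \<equiv> blkproj blk i"
abbreviation D where "D \<equiv> Ginv_sqrt blk \<gamma>"

definition F_avg where "F_avg x = (\<Sum>i<N. f i x) / real N"
definition grad_F where "grad_F x = (1 / real N) *\<^sub>R (\<Sum>i<N. g i x)"
definition fwd where "fwd x = x - Gam blk \<gamma> (grad_F x)"
definition T_fb where "T_fb x = proxG blk \<gamma> G (fwd x)"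

definition sqrt_gamma_min where "sqrt_gamma_min = Min ((\<lambda>i. sqrt (\<gamma> i)) ` {..<N})"

lemma real_N_pos: "real N > 0"
  using N_pos by simp

lemma gamma_blk_pos: "\<gamma> (blk j) > 0"
  using \<gamma>_pos blk_range by auto

lemma normGinv2_eq: "normGinv2 blk \<gamma> v = (norm (D v))\<^sup>2"
proof -
  have "(D v $ j)\<^sup>2 = (v $ j)\<^sup>2 / \<gamma> (blk j)" for j
    using gamma_blk_pos[of j] by (simp add: power_divide)
  then show ?thesis
    unfolding normGinv2_def power2_norm_eq_inner inner_vec_def
    by (simp add: power2_eq_square abs_of_pos[OF gamma_blk_pos])
qed

lemma normGinv_eq: "normGinv blk \<gamma> v = norm (D v)"
  unfolding normGinv_def normGinv2_eq by simp

lemma inj_D: "inj D"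
  unfolding linear_injective_0[OF linear_Ginv_sqrt]
  by (auto simp: vec_eq_iff) (metis gamma_blk_pos less_irrefl)

lemma norm_D_power2_blocks: "(norm (D v))\<^sup>2 = (\<Sum>i<N. (norm (P i v))\<^sup>2 / \<gamma> i)"
proof -
  have "(norm (D v))\<^sup>2 = (\<Sum>i<N. (norm (P i (D v)))\<^sup>2)"
    by (rule norm_power2_blocks[OF blk_range])
  also have "\<dots> = (\<Sum>i<N. (norm (P i v))\<^sup>2 / \<gamma> i)"
  proof (rule sum.cong)
    fix i assume "i \<in> {..<N}"
    then have "\<gamma> i > 0" using \<gamma>_pos by auto
    moreover have "P i (D v) = (1 / sqrt (\<gamma> i)) *\<^sub>R P i v" by (simp add: vec_eq_iff)
    ultimately show "(norm (P i (D v)))\<^sup>2 = (norm (P i v))\<^sup>2 / \<gamma> i"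
      by (simp add: power_mult_distrib power_divide)
  qed simp
  finally show ?thesis .
qed

lemma norm_D_le_blockwise:
  assumes c: "c \<ge> 0" and h: "\<forall>i<N. norm (P i a) \<le> c * norm (P i b)"
  shows "norm (D a) \<le> c * norm (D b)"
proof (rule power2_le_imp_le)
  have "(norm (D a))\<^sup>2 \<le> (\<Sum>i<N. c\<^sup>2 * ((norm (P i b))\<^sup>2 / \<gamma> i))"
    unfolding norm_D_power2_blocks
  proof (rule sum_mono)
    fix i assume i: "i \<in> {..<N}"
    have "(norm (P i a))\<^sup>2 \<le> (c * norm (P i b))\<^sup>2"
      using h i by (intro power_mono) auto
    moreover have "\<gamma> i > 0" using \<gamma>_pos i by auto
    ultimately show "(norm (P i a))\<^sup>2 / \<gamma> i \<le> c\<^sup>2 * ((norm (P i b))\<^sup>2 / \<gamma> i)"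
      by (simp add: divide_right_mono power_mult_distrib)
  qed
  then show "(norm (D a))\<^sup>2 \<le> (c * norm (D b))\<^sup>2"
    by (simp only: power_mult_distrib norm_D_power2_blocks sum_distrib_left)
qed (use c in simp)

lemma sqrt_gamma_min_pos: "sqrt_gamma_min > 0"
  unfolding sqrt_gamma_min_def using \<gamma>_pos N_pos by (subst Min_gr_iff) (auto simp: lessThan_empty_iff)

lemma sqrt_gamma_min_le: "sqrt_gamma_min \<le> sqrt (\<gamma> (blk j))"
  unfolding sqrt_gamma_min_def using blk_range by (intro Min_le) auto

lemma norm_D_le: "norm (D v) \<le> norm v / sqrt_gamma_min"
proof (rule power2_le_imp_le)
  have "(D v $ j)\<^sup>2 \<le> (v $ j)\<^sup>2 / sqrt_gamma_min\<^sup>2" for j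
  proof -
    have "sqrt_gamma_min\<^sup>2 \<le> (sqrt (\<gamma> (blk j)))\<^sup>2"
      by (rule power_mono[OF sqrt_gamma_min_le]) (use sqrt_gamma_min_pos in simp)
    then have "sqrt_gamma_min\<^sup>2 \<le> \<gamma> (blk j)" using gamma_blk_pos[of j] by simp
    then show ?thesis
      using sqrt_gamma_min_pos gamma_blk_pos[of j]
      by (simp add: power_divide divide_left_mono)
  qed
  then have "(\<Sum>j\<in>UNIV. (D v $ j)\<^sup>2) \<le> (\<Sum>j\<in>UNIV. (v $ j)\<^sup>2 / sqrt_gamma_min\<^sup>2)"
    by (rule sum_mono)
  then show "(norm (D v))\<^sup>2 \<le> (norm v / sqrt_gamma_min)\<^sup>2"
    unfolding power2_norm_eq_inner inner_vec_def power_divide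
    by (simp add: power2_eq_square sum_divide_distrib)
qed (use sqrt_gamma_min_pos in simp)

lemma sqrt_gamma_blk_mult_self: "sqrt (\<gamma> (blk j)) * sqrt (\<gamma> (blk j)) = \<gamma> (blk j)"
  using gamma_blk_pos[of j] by simp

lemma inner_D_Gam: "D u \<bullet> D (Gam blk \<gamma> v) = u \<bullet> v"
proof -
  have "D u $ j * D (Gam blk \<gamma> v) $ j = u $ j * v $ j" for j
    using gamma_blk_pos[of j] sqrt_gamma_blk_mult_self[of j]
    by (simp add: Gam_def divide_simps; simp add: mult_ac)
  then show ?thesis unfolding inner_vec_def by simp
qed

lemma inner_D_D: "h \<bullet> D (D r) = D h \<bullet> D r"
  unfolding inner_vec_def by (rule sum.cong) auto

lemma inner_Gam_D_D: "Gam blk \<gamma> v \<bullet> D (D r) = v \<bullet> r"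
proof -
  have "Gam blk \<gamma> v $ j * D (D r) $ j = v $ j * r $ j" for j
    using gamma_blk_pos[of j] sqrt_gamma_blk_mult_self[of j]
    by (simp add: Gam_def divide_simps; simp add: mult_ac)
  then show ?thesis unfolding inner_vec_def by simp
qed

lemma blkproj_Gam: "P i (Gam blk \<gamma> v) = \<gamma> i *\<^sub>R P i v"
  by (simp add: vec_eq_iff Gam_def)

text \<open>Since \<open>f i\<close> depends only on the block \<open>i\<close>, uniqueness of the derivative of
  \<open>f i = f i \<circ> P i\<close> forces \<open>g i x = P i (g i (P i x))\<close>.\<close>

lemma g_eq_blkproj:
  assumes i: "i < N" shows "g i x = P i (g i (P i x))"
proof -
  have "f i z = f i (P i z)" for z
    using f_block i blkproj_blkproj by metis
  then have "f i = f i \<circ> P i"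
    by (metis comp_apply ext)
  moreover have "(f i \<circ> P i has_derivative (\<lambda>h. h \<bullet> g i (P i x)) \<circ> P i) (at x)"
    using f_grad i
    by (intro diff_chain_at linear_imp_has_derivative linear_blkproj) (simp add: gderiv_def)
  ultimately have "(f i has_derivative (\<lambda>h. P i h \<bullet> g i (P i x))) (at x)"
    by (simp add: o_def)
  moreover have "(f i has_derivative (\<lambda>h. h \<bullet> g i x)) (at x)"
    using f_grad i by (simp add: gderiv_def)
  ultimately have "(\<lambda>h. h \<bullet> g i x) = (\<lambda>h. P i h \<bullet> g i (P i x))"
    by (rule has_derivative_unique[rotated])
  then have "h \<bullet> g i x = h \<bullet> P i (g i (P i x))" for h
    using fun_cong[of _ _ h] inner_blkproj_left by metis
  then have "(g i x - P i (g i (P i x))) \<bullet> (g i x - P i (g i (P i x))) = 0"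
    by (simp add: inner_diff_right)
  then show ?thesis by simp
qed

lemma g_blkproj:
  assumes i: "i < N" shows "g i (P i x) = g i x"
proof -
  have "g i (P i x) = P i (g i (P i (P i x)))" by (rule g_eq_blkproj[OF i])
  also have "\<dots> = g i x" by (simp only: blkproj_blkproj) (rule g_eq_blkproj[OF i, symmetric])
  finally show ?thesis .
qed

lemma blkproj_g:
  assumes i: "i < N" shows "P i (g i x) = g i x"
proof -
  have "P i (g i x) = P i (P i (g i (P i x)))" by (subst g_eq_blkproj[OF i]) (rule refl)
  also have "\<dots> = g i x" by (simp only: blkproj_blkproj) (rule g_eq_blkproj[OF i, symmetric])
  finally show ?thesis .
qed

lemma blkproj_g_other:
  assumes i: "i < N" and k: "k \<noteq> i" shows "P k (g i x) = 0"
proof -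
  have "P k (g i x) = P k (P i (g i (P i x)))" by (subst g_eq_blkproj[OF i]) (rule refl)
  also have "\<dots> = 0" by (rule blkproj_blkproj_other[OF k])
  finally show ?thesis .
qed

lemma g_lipschitz_blkproj:
  assumes i: "i < N" shows "norm (g i x - g i y) \<le> L i * norm (P i (x - y))"
proof -
  have "norm (g i (P i x) - g i (P i y)) \<le> L i * norm (P i x - P i y)"
    using g_lip i by blast
  then show ?thesis by (simp only: g_blkproj[OF i] blkproj_diff)
qed

lemma blkproj_sum_g: "P i (\<Sum>k<N. g k x) = (if i < N then g i x else 0)"
proof -
  have "P i (\<Sum>k<N. g k x) = (\<Sum>k<N. if k = i then g i x else 0)"
    unfolding blkproj_sum by (rule sum.cong) (auto simp: blkproj_g blkproj_g_other)
  then show ?thesis by simp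
qed

lemma f_quadratic_bounds:
  assumes i: "i < N"
  shows "f i y \<le> f i x + g i x \<bullet> (y - x) + L i / 2 * (norm (P i (y - x)))\<^sup>2"
    and "f i y \<ge> f i x + g i x \<bullet> (y - x) - L i / 2 * (norm (y - x))\<^sup>2"
proof -
  have "\<And>x. GDERIV (f i) x :> g i x" "\<And>x y. norm (g i x - g i y) \<le> L i * norm (x - y)"
    using f_grad g_lip i by auto
  note bounds = lipschitz_gradient_quadratic_bounds[OF this]
  have "P i (x + P i (y - x)) = P i y"
    by (simp add: blkproj_add blkproj_diff)
  then have "f i (x + P i (y - x)) = f i y"
    using f_block i by blast
  moreover have "g i x \<bullet> P i (y - x) = g i x \<bullet> (y - x)"
    using blkproj_g[OF i, of x] by (metis inner_blkproj_left)
  ultimately show "f i y \<le> f i x + g i x \<bullet> (y - x) + L i / 2 * (norm (P i (y - x)))\<^sup>2"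
    using bounds(1)[of "x + P i (y - x)" x] by simp
  show "f i y \<ge> f i x + g i x \<bullet> (y - x) - L i / 2 * (norm (y - x))\<^sup>2"
    by (rule bounds(2))
qed

lemma F_avg_upper:
  "F_avg w \<le> F_avg u + grad_F u \<bullet> (w - u) + (\<Sum>i<N. L i / (2 * real N) * (norm (P i (w - u)))\<^sup>2)"
proof -
  have "(\<Sum>i<N. f i w)
      \<le> (\<Sum>i<N. f i u) + (\<Sum>i<N. g i u \<bullet> (w - u)) + (\<Sum>i<N. L i / 2 * (norm (P i (w - u)))\<^sup>2)"
    unfolding sum.distrib[symmetric] by (rule sum_mono, rule f_quadratic_bounds(1)) simp
  then have "(\<Sum>i<N. f i w) / real N
      \<le> ((\<Sum>i<N. f i u) + (\<Sum>i<N. g i u \<bullet> (w - u)) + (\<Sum>i<N. L i / 2 * (norm (P i (w - u)))\<^sup>2)) / real N"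
    using real_N_pos by (simp add: divide_right_mono)
  then show ?thesis
    unfolding F_avg_def grad_F_def add_divide_distrib sum_divide_distrib
    by (simp add: inner_sum_left sum_divide_distrib)
qed

lemma exists_lower_bound: "\<exists>m. \<forall>y. ereal m \<le> ereal (F_avg y) + G y"
proof -
  obtain x0 where x0: "\<And>y. ereal (F_avg x0) + G x0 \<le> ereal (F_avg y) + G y"
    using argmin unfolding F_avg_def by blast
  obtain z0 where z0: "G z0 \<noteq> \<infinity>" using G_proper unfolding proper_fun_def by blast
  have "G x0 \<noteq> \<infinity>"
    using x0[of z0] z0 G_proper unfolding proper_fun_def by (cases "G z0") auto
  moreover have "G x0 \<noteq> -\<infinity>" using G_proper unfolding proper_fun_def by blast
  ultimately obtain gx where "G x0 = ereal gx" by (cases "G x0") auto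
  then show ?thesis using x0 by (intro exI[of _ "F_avg x0 + gx"]) simp
qed

text \<open>The hypothesis \<open>\<gamma>\<^sub>i L\<^sub>i < N\<close> makes the proximal objective strongly convex: \<open>\<kappa> > 0\<close>.\<close>

definition kappa where "kappa = Min ((\<lambda>i. 1 / \<gamma> i - L i / real N) ` {..<N})"

lemma kappa_pos: "kappa > 0"
proof -
  have "L i / real N < 1 / \<gamma> i" if "i < N" for i
    using \<gamma>_pos \<gamma>_bound that real_N_pos by (simp add: field_simps)
  then show ?thesis
    unfolding kappa_def using N_pos by (subst Min_gr_iff) (auto simp: lessThan_empty_iff)
qed

lemma kappa_le: "i < N \<Longrightarrow> kappa \<le> 1 / \<gamma> i - L i / real N"
  unfolding kappa_def by (intro Min_le) auto

lemma prox_objective_lower: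
  assumes m: "\<forall>y. ereal m \<le> ereal (F_avg y) + G y"
  shows "ereal (m - F_avg u - norm (grad_F u) * norm (w - u) + kappa / 2 * (norm (w - u))\<^sup>2)
     \<le> G w + ereal (normGinv2 blk \<gamma> (w - u) / 2)"
proof -
  define e where "e = w - u"
  have G_lower: "ereal (m - F_avg w) \<le> G w"
    using m[rule_format, of w] G_proper unfolding proper_fun_def by (cases "G w") auto
  have "kappa / 2 * (norm e)\<^sup>2 = (\<Sum>i<N. kappa / 2 * (norm (P i e))\<^sup>2)"
    using norm_power2_blocks[OF blk_range, of e] by (simp add: sum_distrib_left)
  also have "\<dots> \<le> (\<Sum>i<N. (norm (P i e))\<^sup>2 / \<gamma> i / 2 - L i / (2 * real N) * (norm (P i e))\<^sup>2)"
  proof (rule sum_mono)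
    fix i assume "i \<in> {..<N}"
    then have "kappa / 2 * (norm (P i e))\<^sup>2 \<le> (1 / \<gamma> i - L i / real N) / 2 * (norm (P i e))\<^sup>2"
      using kappa_le by (intro mult_right_mono) simp_all
    then show "kappa / 2 * (norm (P i e))\<^sup>2 \<le> (norm (P i e))\<^sup>2 / \<gamma> i / 2 - L i / (2 * real N) * (norm (P i e))\<^sup>2"
      by (simp add: field_simps)
  qed
  also have "\<dots> = normGinv2 blk \<gamma> e / 2 - (\<Sum>i<N. L i / (2 * real N) * (norm (P i e))\<^sup>2)"
    unfolding normGinv2_eq norm_D_power2_blocks by (simp add: sum_subtractf sum_divide_distrib)
  finally have "m - F_avg u - norm (grad_F u) * norm e + kappa / 2 * (norm e)\<^sup>2
      \<le> (m - F_avg w) + normGinv2 blk \<gamma> e / 2"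
    using F_avg_upper[of w u] norm_cauchy_schwarz[of "grad_F u" e] unfolding e_def by linarith
  then have "ereal (m - F_avg u - norm (grad_F u) * norm e + kappa / 2 * (norm e)\<^sup>2)
      \<le> ereal (m - F_avg w) + ereal (normGinv2 blk \<gamma> e / 2)"
    by simp
  also have "\<dots> \<le> G w + ereal (normGinv2 blk \<gamma> e / 2)"
    by (rule add_right_mono[OF G_lower])
  finally show ?thesis unfolding e_def .
qed

lemma prox_objective_lsc: "lsc_fun (\<lambda>w. G w + ereal (normGinv2 blk \<gamma> (w - u) / 2))"
  unfolding lsc_fun_def
proof (intro allI impI)
  fix x X assume X: "X \<longlonglongrightarrow> (x::real^'n)"
  define q where "q = (\<lambda>w. normGinv2 blk \<gamma> (w - u) / 2)"
  have q: "(\<lambda>k. ereal (q (X k))) \<longlonglongrightarrow> ereal (q x)"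
    unfolding q_def normGinv2_eq
    by (intro tendsto_intros bounded_linear.tendsto[OF linear_conv_bounded_linear[THEN iffD1, OF linear_Ginv_sqrt]] X)
      simp
  have "G x \<le> liminf (\<lambda>k. G (X k))" using G_lsc X unfolding lsc_fun_def by blast
  then have "ereal (q x) + G x \<le> ereal (q x) + liminf (\<lambda>k. G (X k))"
    by (rule add_left_mono)
  also have "\<dots> = liminf (\<lambda>k. ereal (q (X k)) + G (X k))"
    by (rule ereal_liminf_lim_add[OF q, symmetric]) simp
  finally show "G x + ereal (q x) \<le> liminf (\<lambda>k. G (X k) + ereal (q (X k)))"
    by (simp only: add.commute)
qed

lemma prox_point_proxG: "prox_point D G u (proxG blk \<gamma> G u)"
proof -
  obtain m where m: "\<forall>y. ereal m \<le> ereal (F_avg y) + G y" using exists_lower_bound by blast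
  obtain z0 where "G z0 \<noteq> \<infinity>" using G_proper unfolding proper_fun_def by blast
  then have fin: "G z0 + ereal (normGinv2 blk \<gamma> (z0 - u) / 2) < \<infinity>" by simp
  have "\<exists>p. \<forall>z. G p + ereal (normGinv2 blk \<gamma> (p - u) / 2) \<le> G z + ereal (normGinv2 blk \<gamma> (z - u) / 2)"
    by (rule lsc_attains_min_if_quadratic_minorant[OF prox_objective_lsc fin, of "kappa / 2"])
      (use kappa_pos in simp, rule prox_objective_lower[OF m])
  then have "\<exists>!p. prox_point D G u p"
    unfolding prox_point_def normGinv2_eq[symmetric]
    using prox_point_unique[OF linear_Ginv_sqrt inj_D G_proper G_convex]
    unfolding prox_point_def normGinv2_eq[symmetric] by blast
  then show ?thesis
    unfolding proxG_def prox_point_def normGinv2_eq[symmetric] by (rule theI')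
qed

lemma proxG_nonexpansive: "norm (D (proxG blk \<gamma> G u1 - proxG blk \<gamma> G u2)) \<le> norm (D (u1 - u2))"
  by (rule prox_point_nonexpansive[OF linear_Ginv_sqrt G_proper G_convex prox_point_proxG prox_point_proxG])

lemma blkproj_grad_F: "i < N \<Longrightarrow> P i (grad_F x) = (1 / real N) *\<^sub>R g i x"
  unfolding grad_F_def by (simp add: blkproj_scaleR blkproj_sum_g)

lemma blkproj_fwd_diff:
  assumes i: "i < N"
  shows "P i (fwd x - fwd y) = P i (x - y) - (\<gamma> i / real N) *\<^sub>R (g i x - g i y)"
  unfolding fwd_def blkproj_diff blkproj_Gam blkproj_grad_F[OF i] by (simp add: algebra_simps)

lemma gamma_L_div_N_lt_1: "i < N \<Longrightarrow> \<gamma> i / real N * L i < 1"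
  using \<gamma>_bound real_N_pos by (simp add: field_simps)

lemma gamma_div_N_pos: "i < N \<Longrightarrow> \<gamma> i / real N > 0"
  using \<gamma>_pos real_N_pos by simp

lemma norm_blkproj_fwd_diff_le:
  assumes i: "i < N"
  shows "norm (P i (fwd x - fwd y)) \<le> 2 * norm (P i (x - y))"
proof -
  have "norm (P i (fwd x - fwd y)) \<le> norm (P i (x - y)) + \<gamma> i / real N * norm (g i x - g i y)"
    unfolding blkproj_fwd_diff[OF i]
    using norm_triangle_ineq4[of "P i (x - y)" "(\<gamma> i / real N) *\<^sub>R (g i x - g i y)"]
    using \<gamma>_pos i by (simp add: abs_of_pos)
  also have "\<gamma> i / real N * norm (g i x - g i y) \<le> (\<gamma> i / real N * L i) * norm (P i (x - y))"
    using mult_left_mono[OF g_lipschitz_blkproj[OF i] less_imp_le[OF gamma_div_N_pos[OF i]]]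
    by (simp add: mult.assoc)
  also have "\<dots> \<le> 1 * norm (P i (x - y))"
    using gamma_L_div_N_lt_1[OF i] by (intro mult_right_mono) simp_all
  finally show ?thesis by simp
qed

lemma T_fb_lipschitz: "norm (D (T_fb x - T_fb y)) \<le> 2 * norm (D (x - y))"
proof -
  have "norm (D (T_fb x - T_fb y)) \<le> norm (D (fwd x - fwd y))"
    unfolding T_fb_def by (rule proxG_nonexpansive)
  also have "\<dots> \<le> 2 * norm (D (x - y))"
    by (rule norm_D_le_blockwise) (simp_all add: norm_blkproj_fwd_diff_le)
  finally show ?thesis .
qed

lemma strong_convexity_le_L:
  assumes i: "i < N" and cv: "convex_on UNIV (\<lambda>x. f i x - \<mu> / 2 * (norm (P i x))\<^sup>2)"
  shows "\<mu> \<le> L i"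
proof -
  obtain j where j: "blk j = i" using blk_nonempty i by blast
  define e :: "real^'n" where "e = axis j 1"
  have Pe: "P i e = e" unfolding e_def using j by (auto simp: vec_eq_iff axis_def)
  have ne: "norm e = 1" unfolding e_def by simp
  have "\<And>y. GDERIV (f i) y :> g i y" using f_grad i by auto
  from strongly_convex_gradient_lower_bound[OF linear_blkproj this cv, where z = "x + e" and x = x]
  have "f i x + g i x \<bullet> e + \<mu> / 2 * (norm (P i e))\<^sup>2 \<le> f i (x + e)" by simp
  moreover have "f i (x + e) \<le> f i x + g i x \<bullet> e + L i / 2 * (norm (P i e))\<^sup>2"
    using f_quadratic_bounds(1)[OF i, of "x + e" x] by simp
  ultimately show ?thesis using Pe ne by simp
qed

text \<open>Cocoercivity of the gradient \<open>dH\<close> of the convex function \<open>H = f i - \<mu>/2 \<parallel>P i \<cdot>\<parallel>\<^sup>2\<close>, obtained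
  as in the Baillon-Haddad theorem by combining its convexity with the descent lemma along block \<open>i\<close>.\<close>

lemma cocoercive_shifted_gradient:
  assumes i: "i < N" and cv: "convex_on UNIV (\<lambda>x. f i x - \<mu> / 2 * (norm (P i x))\<^sup>2)"
    and M: "M > 0" "M \<ge> L i - \<mu>"
  shows "(norm ((g i a - \<mu> *\<^sub>R P i a) - (g i b - \<mu> *\<^sub>R P i b)))\<^sup>2
           \<le> M * (((g i a - \<mu> *\<^sub>R P i a) - (g i b - \<mu> *\<^sub>R P i b)) \<bullet> (a - b))"
proof -
  define H where "H = (\<lambda>z. f i z - \<mu> / 2 * (norm (P i z))\<^sup>2)"
  define dH where "dH = (\<lambda>z. g i z - \<mu> *\<^sub>R P i z)"
  have sq: "(norm (P i w))\<^sup>2 = (norm (P i z))\<^sup>2 + 2 * (P i z \<bullet> (w - z)) + (norm (P i (w - z)))\<^sup>2" for z w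
  proof -
    have "P i w = P i z + 1 *\<^sub>R P i (w - z)" by (simp add: blkproj_diff)
    then have "(norm (P i w))\<^sup>2 = (norm (P i z))\<^sup>2 + 2 * 1 * (P i z \<bullet> P i (w - z)) + 1\<^sup>2 * (norm (P i (w - z)))\<^sup>2"
      by (simp only: norm_add_scaleR_power2)
    then show ?thesis by (simp add: inner_blkproj_left[symmetric])
  qed
  have dH_inner: "dH z \<bullet> v = g i z \<bullet> v - \<mu> * (P i z \<bullet> v)" for z v
    unfolding dH_def by (simp add: inner_diff_left)
  have H_above: "H w \<ge> H z + dH z \<bullet> (w - z)" for z w
  proof -
    have "\<And>y. GDERIV (f i) y :> g i y" using f_grad i by auto
    from strongly_convex_gradient_lower_bound[OF linear_blkproj this cv, where z = w and x = z]
    show ?thesis unfolding H_def dH_inner sq[of w z] by (simp add: algebra_simps)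
  qed
  have H_below: "H (z + v) \<le> H z + dH z \<bullet> v + M / 2 * (norm v)\<^sup>2" if Pv: "P i v = v" for z v
  proof -
    have "f i (z + v) \<le> f i z + g i z \<bullet> v + L i / 2 * (norm v)\<^sup>2"
      using f_quadratic_bounds(1)[OF i, of "z + v" z] Pv by simp
    moreover have "(L i - \<mu>) / 2 * (norm v)\<^sup>2 \<le> M / 2 * (norm v)\<^sup>2"
      by (rule mult_right_mono) (use M in simp_all)
    moreover have "H (z + v) = f i (z + v) - \<mu> / 2 * ((norm (P i z))\<^sup>2 + 2 * (P i z \<bullet> v) + (norm v)\<^sup>2)"
      unfolding H_def sq[of "z + v" z] using Pv by simp
    ultimately show ?thesis unfolding H_def dH_inner by (simp add: algebra_simps)
  qed
  have blkproj_dH: "P i (dH z) = dH z" for z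
    unfolding dH_def blkproj_diff blkproj_scaleR blkproj_g[OF i] by simp
  have half: "H b - H a + dH b \<bullet> (a - b) \<le> - (norm (dH a - dH b))\<^sup>2 / (2 * M)" for a b
  proof -
    define \<Delta> where "\<Delta> = dH a - dH b"
    define v where "v = (- 1 / M) *\<^sub>R \<Delta>"
    have Pv: "P i v = v" unfolding v_def \<Delta>_def blkproj_scaleR blkproj_diff blkproj_dH ..
    have "H b - H a + dH b \<bullet> (a - b) \<le> (dH a - dH b) \<bullet> v + M / 2 * (norm v)\<^sup>2"
      using H_above[of b "a + v"] H_below[OF Pv, of a]
      by (simp add: inner_diff_left inner_diff_right inner_add_right algebra_simps)
    also have "(dH a - dH b) \<bullet> v = - (norm \<Delta>)\<^sup>2 / M"
      unfolding v_def \<Delta>_def by (simp add: power2_norm_eq_inner)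
    also have "M / 2 * (norm v)\<^sup>2 = (norm \<Delta>)\<^sup>2 / (2 * M)"
      unfolding v_def using M by (simp add: power2_eq_square field_simps)
    finally show ?thesis unfolding \<Delta>_def using M by (simp add: field_simps)
  qed
  have "dH b \<bullet> (a - b) + dH a \<bullet> (b - a) \<le> - (norm (dH a - dH b))\<^sup>2 / M"
    using half[of a b] half[of b a] by (simp add: norm_minus_commute field_simps)
  then have "(norm (dH a - dH b))\<^sup>2 / M \<le> (dH a - dH b) \<bullet> (a - b)"
    by (simp add: inner_diff_left inner_diff_right algebra_simps)
  then show ?thesis unfolding dH_def using M by (simp add: field_simps)
qed

lemma norm_blkproj_fwd_diff_contraction:
  assumes i: "i < N" and \<mu>: "\<mu> > 0" and cv: "convex_on UNIV (\<lambda>x. f i x - \<mu> / 2 * (norm (P i x))\<^sup>2)"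
  shows "norm (P i (fwd x - fwd y)) \<le> (1 - \<gamma> i / real N * \<mu>) * norm (P i (x - y))"
proof -
  define t where "t = \<gamma> i / real N"
  have t0: "t > 0" unfolding t_def by (rule gamma_div_N_pos[OF i])
  have tL: "t * L i < 1" unfolding t_def by (rule gamma_L_div_N_lt_1[OF i])
  have "t * \<mu> \<le> t * L i" using strong_convexity_le_L[OF i cv] t0 by simp
  then have tmu: "t * \<mu> < 1" using tL by linarith
  define c where "c = 1 - t * \<mu>"
  have c0: "c > 0" unfolding c_def using tmu by simp
  define M where "M = 2 * c / t"
  have M0: "M > 0" unfolding M_def using c0 t0 by simp
  have "t * (L i - \<mu>) \<le> 2 * c" unfolding c_def using tL tmu t0 \<mu> by (simp add: algebra_simps)
  then have M_ge: "M \<ge> L i - \<mu>" unfolding M_def using t0 by (simp add: field_simps)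
  define d where "d = P i (x - y)"
  define \<Delta> where "\<Delta> = (g i x - \<mu> *\<^sub>R P i x) - (g i y - \<mu> *\<^sub>R P i y)"
  have P\<Delta>: "P i \<Delta> = \<Delta>" unfolding \<Delta>_def blkproj_diff blkproj_scaleR blkproj_g[OF i] by simp
  have "(norm \<Delta>)\<^sup>2 \<le> M * (\<Delta> \<bullet> (x - y))"
    unfolding \<Delta>_def by (rule cocoercive_shifted_gradient[OF i cv M0 M_ge])
  also have "\<Delta> \<bullet> (x - y) = \<Delta> \<bullet> d" unfolding d_def by (metis P\<Delta> inner_blkproj_left)
  finally have co: "(norm \<Delta>)\<^sup>2 \<le> M * (\<Delta> \<bullet> d)" .
  have "P i (fwd x - fwd y) = c *\<^sub>R d - t *\<^sub>R \<Delta>"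
    unfolding blkproj_fwd_diff[OF i] t_def[symmetric] c_def d_def \<Delta>_def
    by (simp add: algebra_simps blkproj_diff)
  then have "(norm (P i (fwd x - fwd y)))\<^sup>2 = c\<^sup>2 * (norm d)\<^sup>2 - 2 * c * t * (d \<bullet> \<Delta>) + t\<^sup>2 * (norm \<Delta>)\<^sup>2"
    by (simp only: norm_scaleR_diff_power2)
  also have "t\<^sup>2 * (norm \<Delta>)\<^sup>2 \<le> 2 * c * t * (d \<bullet> \<Delta>)"
    using mult_left_mono[OF co, of "t\<^sup>2"] t0
    unfolding M_def by (simp add: power2_eq_square inner_commute field_simps)
  finally have "(norm (P i (fwd x - fwd y)))\<^sup>2 \<le> (c * norm d)\<^sup>2"
    by (simp add: power_mult_distrib)
  then have "norm (P i (fwd x - fwd y)) \<le> c * norm d"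
    by (rule power2_le_imp_le) (use c0 in simp)
  then show ?thesis unfolding c_def t_def d_def .
qed

lemma T_fb_contraction:
  assumes sc: "\<forall>i<N. \<mu> i > 0 \<and> convex_on UNIV (\<lambda>x. f i x - \<mu> i / 2 * (norm (P i x))\<^sup>2)"
  defines "\<delta> \<equiv> Min ((\<lambda>i. \<gamma> i * \<mu> i) ` {..<N}) / real N"
  shows "0 \<le> 1 - \<delta>" and "norm (D (T_fb x - T_fb y)) \<le> (1 - \<delta>) * norm (D (x - y))"
proof -
  have \<delta>_le: "\<delta> \<le> \<gamma> i / real N * \<mu> i" if i: "i < N" for i
  proof -
    have "Min ((\<lambda>i. \<gamma> i * \<mu> i) ` {..<N}) \<le> \<gamma> i * \<mu> i" using i by (intro Min_le) auto
    then show ?thesis unfolding \<delta>_def using real_N_pos by (simp add: divide_right_mono)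
  qed
  have i0: "0 < N" using N_pos by simp
  have "\<gamma> 0 / real N * \<mu> 0 \<le> \<gamma> 0 / real N * L 0"
    using sc strong_convexity_le_L[OF i0] gamma_div_N_pos[OF i0] i0 by (intro mult_left_mono) auto
  then show "0 \<le> 1 - \<delta>"
    using \<delta>_le[OF i0] gamma_L_div_N_lt_1[OF i0] by simp
  have "norm (D (T_fb x - T_fb y)) \<le> norm (D (fwd x - fwd y))"
    unfolding T_fb_def by (rule proxG_nonexpansive)
  also have "\<dots> \<le> (1 - \<delta>) * norm (D (x - y))"
  proof (rule norm_D_le_blockwise[OF \<open>0 \<le> 1 - \<delta>\<close>], intro allI impI)
    fix i assume i: "i < N"
    have "norm (P i (fwd x - fwd y)) \<le> (1 - \<gamma> i / real N * \<mu> i) * norm (P i (x - y))"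
      using norm_blkproj_fwd_diff_contraction[OF i] sc i by blast
    also have "\<dots> \<le> (1 - \<delta>) * norm (P i (x - y))"
      using \<delta>_le[OF i] by (intro mult_right_mono) simp_all
    finally show "norm (P i (fwd x - fwd y)) \<le> (1 - \<delta>) * norm (P i (x - y))" .
  qed
  finally show "norm (D (T_fb x - T_fb y)) \<le> (1 - \<delta>) * norm (D (x - y))" .
qed

text \<open>The infimum defining the envelope is attained at \<open>w = T x\<close>, which gives the closed form \<open>FB\<close>.\<close>

definition FB where
  "FB x = F_avg x + grad_F x \<bullet> (T_fb x - x) + real_of_ereal (G (T_fb x)) + normGinv2 blk \<gamma> (T_fb x - x) / 2"

definition res where "res x = norm (D (x - T_fb x))"

lemma G_T_fb: "G (T_fb x) = ereal (real_of_ereal (G (T_fb x)))"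
proof -
  obtain r where "G (T_fb x) = ereal r"
    using prox_point_finite[OF G_proper prox_point_proxG[of "fwd x"]] unfolding T_fb_def by blast
  then show ?thesis by simp
qed

lemma FBE_objective_eq:
  "ereal (F_avg x + grad_F x \<bullet> (w - x)) + G w + ereal (normGinv2 blk \<gamma> (w - x) / 2)
   = ereal (F_avg x - normGinv2 blk \<gamma> (Gam blk \<gamma> (grad_F x)) / 2)
     + (G w + ereal ((norm (D (w - fwd x)))\<^sup>2 / 2))"
proof -
  have "D (w - fwd x) = D (w - x) + D (Gam blk \<gamma> (grad_F x))"
    unfolding fwd_def by (simp add: Ginv_sqrt_add[symmetric] algebra_simps)
  then have "(norm (D (w - fwd x)))\<^sup>2
      = normGinv2 blk \<gamma> (w - x) + 2 * (grad_F x \<bullet> (w - x)) + normGinv2 blk \<gamma> (Gam blk \<gamma> (grad_F x))"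
    using norm_add_scaleR_power2[of "D (w - x)" 1 "D (Gam blk \<gamma> (grad_F x))"]
    by (simp add: normGinv2_eq inner_D_Gam inner_commute)
  then show ?thesis by (cases "G w") (simp_all add: field_simps)
qed

lemma FBE_eq: "FBE blk \<gamma> F_avg grad_F G = (\<lambda>x. ereal (FB x))"
proof
  fix x
  have "ereal (F_avg x + grad_F x \<bullet> (T_fb x - x)) + G (T_fb x) + ereal (normGinv2 blk \<gamma> (T_fb x - x) / 2)
      = ereal (FB x)"
    unfolding FB_def by (subst G_T_fb) simp
  moreover have "ereal (F_avg x + grad_F x \<bullet> (T_fb x - x)) + G (T_fb x) + ereal (normGinv2 blk \<gamma> (T_fb x - x) / 2)
      \<le> ereal (F_avg x + grad_F x \<bullet> (w - x)) + G w + ereal (normGinv2 blk \<gamma> (w - x) / 2)" for w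
    using prox_point_proxG[of "fwd x"] unfolding FBE_objective_eq prox_point_def T_fb_def
    by (intro add_left_mono) blast
  ultimately show "FBE blk \<gamma> F_avg grad_F G x = ereal (FB x)"
    unfolding FBE_def by (intro antisym INF_greatest INF_lower2[of "T_fb x"]) auto
qed

lemma FB_le: "FB z \<le> F_avg z + grad_F z \<bullet> (T_fb x - z) + real_of_ereal (G (T_fb x)) + normGinv2 blk \<gamma> (T_fb x - z) / 2"
proof -
  have "FBE blk \<gamma> F_avg grad_F G z
      \<le> ereal (F_avg z + grad_F z \<bullet> (T_fb x - z)) + G (T_fb x) + ereal (normGinv2 blk \<gamma> (T_fb x - z) / 2)"
    unfolding FBE_def by (rule INF_lower) simp
  then show ?thesis unfolding FBE_eq by (subst (asm) G_T_fb) simp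
qed

definition gammaL_max where "gammaL_max = Max ((\<lambda>i. \<gamma> i * L i) ` {..<N})"

lemma gammaL_max_ge: "i < N \<Longrightarrow> \<gamma> i * L i \<le> gammaL_max"
  unfolding gammaL_max_def by (intro Max_ge) auto

lemma gammaL_max_nonneg: "0 \<le> gammaL_max"
proof -
  have i0: "0 < N" using N_pos by simp
  then have "0 \<le> \<gamma> 0 * L 0" using \<gamma>_pos L_nonneg by (simp add: less_imp_le)
  then show ?thesis using gammaL_max_ge[OF i0] by linarith
qed

lemma F_avg_diff_le:
  "F_avg z - F_avg x - grad_F z \<bullet> (z - x) \<le> (\<Sum>i<N. L i) / (2 * real N) * (norm (z - x))\<^sup>2"
proof -
  have "(\<Sum>i<N. f i z - f i x - g i z \<bullet> (z - x)) \<le> (\<Sum>i<N. L i / 2 * (norm (z - x))\<^sup>2)"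
  proof (rule sum_mono)
    fix i assume "i \<in> {..<N}"
    then have "f i z + g i z \<bullet> (x - z) - L i / 2 * (norm (x - z))\<^sup>2 \<le> f i x"
      by (intro f_quadratic_bounds(2)) simp
    then show "f i z - f i x - g i z \<bullet> (z - x) \<le> L i / 2 * (norm (z - x))\<^sup>2"
      by (simp add: inner_diff_right norm_minus_commute)
  qed
  then have "((\<Sum>i<N. f i z) - (\<Sum>i<N. f i x) - (\<Sum>i<N. g i z \<bullet> (z - x))) / real N
      \<le> ((\<Sum>i<N. L i) / 2 * (norm (z - x))\<^sup>2) / real N"
    using real_N_pos
    by (intro divide_right_mono) (simp_all add: sum_subtractf sum_distrib_right sum_divide_distrib)
  then show ?thesis
    unfolding F_avg_def grad_F_def by (simp add: inner_sum_left diff_divide_distrib)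
qed

lemma norm_Gam_grad_sum_diff_le:
  "norm (Gam blk \<gamma> ((\<Sum>i<N. g i z) - (\<Sum>i<N. g i x))) \<le> gammaL_max * norm (z - x)"
proof (rule power2_le_imp_le)
  define \<Delta> where "\<Delta> = (\<Sum>i<N. g i z) - (\<Sum>i<N. g i x)"
  have "norm (P i (Gam blk \<gamma> \<Delta>)) \<le> gammaL_max * norm (P i (z - x))" if i: "i < N" for i
  proof -
    have "norm (P i (Gam blk \<gamma> \<Delta>)) = \<gamma> i * norm (g i z - g i x)"
      unfolding blkproj_Gam \<Delta>_def blkproj_diff blkproj_sum_g using \<gamma>_pos i by (simp add: abs_of_pos)
    also have "\<dots> \<le> \<gamma> i * (L i * norm (P i (z - x)))"
      using \<gamma>_pos i by (intro mult_left_mono g_lipschitz_blkproj) auto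
    also have "\<dots> \<le> gammaL_max * norm (P i (z - x))"
      unfolding mult.assoc[symmetric] by (rule mult_right_mono[OF gammaL_max_ge[OF i]]) simp
    finally show ?thesis .
  qed
  then have "(\<Sum>i<N. (norm (P i (Gam blk \<gamma> \<Delta>)))\<^sup>2) \<le> (\<Sum>i<N. (gammaL_max * norm (P i (z - x)))\<^sup>2)"
    by (intro sum_mono power_mono) auto
  then show "(norm (Gam blk \<gamma> \<Delta>))\<^sup>2 \<le> (gammaL_max * norm (z - x))\<^sup>2"
    unfolding norm_power2_blocks[OF blk_range, of "Gam blk \<gamma> \<Delta>"]
    by (simp add: power_mult_distrib sum_distrib_left norm_power2_blocks[OF blk_range, of "z - x"])
qed (use gammaL_max_nonneg in simp)

definition C_FB where "C_FB = (real N + gammaL_max) / (real N * sqrt_gamma_min)"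
definition K_FB where "K_FB = (\<Sum>i<N. L i) / (2 * real N) + 1 / (2 * sqrt_gamma_min\<^sup>2)"

lemma C_FB_nonneg: "0 \<le> C_FB"
  unfolding C_FB_def using gammaL_max_nonneg real_N_pos sqrt_gamma_min_pos by simp

lemma K_FB_nonneg: "0 \<le> K_FB"
proof -
  have "0 \<le> (\<Sum>i<N. L i)" using L_nonneg by (intro sum_nonneg) auto
  then show ?thesis unfolding K_FB_def using real_N_pos sqrt_gamma_min_pos by simp
qed

text \<open>Comparing \<open>FB z\<close> with the value of the envelope objective at the point \<open>w = T x\<close>.\<close>

lemma FB_upper_estimate: "FB z - FB x \<le> C_FB * res x * norm (z - x) + K_FB * (norm (z - x))\<^sup>2"
proof -
  define h where "h = z - x"
  define r where "r = x - T_fb x"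
  define \<Delta> where "\<Delta> = (\<Sum>i<N. g i z) - (\<Sum>i<N. g i x)"
  have "T_fb x - z = - (r + h)" unfolding r_def h_def by simp
  then have "normGinv2 blk \<gamma> (T_fb x - z) = (norm (D r + D h))\<^sup>2"
    unfolding normGinv2_eq by (simp only: Ginv_sqrt_minus Ginv_sqrt_add norm_minus_cancel)
  then have nz: "normGinv2 blk \<gamma> (T_fb x - z) = (norm (D r))\<^sup>2 + 2 * (D r \<bullet> D h) + (norm (D h))\<^sup>2"
    using norm_add_scaleR_power2[of "D r" 1 "D h"] by simp
  have "T_fb x - x = - r" unfolding r_def by simp
  then have nx: "normGinv2 blk \<gamma> (T_fb x - x) = (norm (D r))\<^sup>2"
    unfolding normGinv2_eq by (simp only: Ginv_sqrt_minus norm_minus_cancel)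
  have lin: "grad_F z \<bullet> (T_fb x - z) - grad_F x \<bullet> (T_fb x - x) = - (grad_F z \<bullet> h) - (grad_F z - grad_F x) \<bullet> r"
    unfolding r_def h_def by (simp add: inner_diff_left inner_diff_right)
  have cross: "D r \<bullet> D h - (grad_F z - grad_F x) \<bullet> r = (h - (1 / real N) *\<^sub>R Gam blk \<gamma> \<Delta>) \<bullet> D (D r)"
  proof -
    have "(h - (1 / real N) *\<^sub>R Gam blk \<gamma> \<Delta>) \<bullet> D (D r)
        = h \<bullet> D (D r) - (1 / real N) * (Gam blk \<gamma> \<Delta> \<bullet> D (D r))"
      by (simp add: inner_diff_left)
    also have "\<dots> = D h \<bullet> D r - (1 / real N) * (\<Delta> \<bullet> r)"
      by (simp only: inner_Gam_D_D inner_D_D[of h])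
    moreover have "grad_F z - grad_F x = (1 / real N) *\<^sub>R \<Delta>"
      unfolding grad_F_def \<Delta>_def by (simp add: scaleR_diff_right)
    ultimately show ?thesis by (simp add: inner_commute)
  qed
  have "(h - (1 / real N) *\<^sub>R Gam blk \<gamma> \<Delta>) \<bullet> D (D r)
      \<le> norm (h - (1 / real N) *\<^sub>R Gam blk \<gamma> \<Delta>) * norm (D (D r))"
    by (rule norm_cauchy_schwarz)
  also have "\<dots> \<le> (norm h + gammaL_max * norm h / real N) * (norm (D r) / sqrt_gamma_min)"
  proof (rule mult_mono)
    have "norm ((1 / real N) *\<^sub>R Gam blk \<gamma> \<Delta>) \<le> gammaL_max * norm h / real N"
      unfolding \<Delta>_def h_def using real_N_pos norm_Gam_grad_sum_diff_le[of z x]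
      by (simp add: divide_right_mono)
    then show "norm (h - (1 / real N) *\<^sub>R Gam blk \<gamma> \<Delta>) \<le> norm h + gammaL_max * norm h / real N"
      using norm_triangle_ineq4[of h] by (meson add_left_mono order_trans)
  qed (use norm_D_le gammaL_max_nonneg real_N_pos in auto)
  also have "\<dots> = C_FB * res x * norm h"
    unfolding C_FB_def res_def r_def using real_N_pos sqrt_gamma_min_pos by (simp add: field_simps)
  finally have "D r \<bullet> D h - (grad_F z - grad_F x) \<bullet> r \<le> C_FB * res x * norm h"
    unfolding cross .
  moreover have "(norm (D h))\<^sup>2 / 2 \<le> 1 / (2 * sqrt_gamma_min\<^sup>2) * (norm h)\<^sup>2"
    using power_mono[OF norm_D_le[of h], of 2] sqrt_gamma_min_pos by (simp add: power_divide)
  moreover have "F_avg z - F_avg x - grad_F z \<bullet> h \<le> (\<Sum>i<N. L i) / (2 * real N) * (norm h)\<^sup>2"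
    unfolding h_def by (rule F_avg_diff_le)
  moreover have "FB z - FB x
      \<le> (F_avg z - F_avg x - grad_F z \<bullet> h) + (D r \<bullet> D h - (grad_F z - grad_F x) \<bullet> r) + (norm (D h))\<^sup>2 / 2"
    using FB_le[of z x] nz nx lin unfolding FB_def[of x] by (simp add: field_simps)
  ultimately show ?thesis
    unfolding K_FB_def h_def by (simp add: algebra_simps)
qed

lemma res_lipschitz: "res z \<le> res x + 3 / sqrt_gamma_min * norm (z - x)"
proof -
  have e: "D (z - T_fb z) = D (x - T_fb x) + D (z - x) - D (T_fb z - T_fb x)"
    by (simp add: Ginv_sqrt_diff)
  have "res z \<le> res x + norm (D (z - x)) + norm (D (T_fb z - T_fb x))"
    unfolding res_def e
    by (rule order_trans[OF norm_triangle_ineq4]) (rule add_right_mono[OF norm_triangle_ineq])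
  also have "\<dots> \<le> res x + 3 * norm (D (z - x))"
    using T_fb_lipschitz[of z x] by simp
  also have "\<dots> \<le> res x + 3 * (norm (z - x) / sqrt_gamma_min)"
    using norm_D_le[of "z - x"] by simp
  finally show ?thesis by simp
qed

lemma dist0_limiting_subdiff_FBE_le:
  "dist0 (limiting_subdiff (FBE blk \<gamma> F_avg grad_F G) x) \<le> ereal (C_FB * res x)"
proof -
  interpret quadratic_upper_estimate FB "\<lambda>x. C_FB * res x" K_FB "3 * C_FB / sqrt_gamma_min"
  proof
    show "C_FB * res z \<le> C_FB * res x + 3 * C_FB / sqrt_gamma_min * norm (z - x)" for x z
      using mult_left_mono[OF res_lipschitz C_FB_nonneg] by (simp add: algebra_simps)
  qed (use FB_upper_estimate C_FB_nonneg K_FB_nonneg sqrt_gamma_min_pos res_def in auto)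
  show ?thesis unfolding FBE_eq by (rule dist0_limiting_subdiff_le)
qed

end

theorem lemmaA2:
  fixes N :: nat
    and blk :: "'n::finite \<Rightarrow> nat"
    and f :: "nat \<Rightarrow> real^'n \<Rightarrow> real"
    and g :: "nat \<Rightarrow> real^'n \<Rightarrow> real^'n"
    and L :: "nat \<Rightarrow> real"
    and \<gamma> :: "nat \<Rightarrow> real"
    and \<mu> :: "nat \<Rightarrow> real"
    and G :: "real^'n \<Rightarrow> ereal"
  assumes N_pos: "N \<ge> 1"
    and blk_range: "\<forall>j. blk j < N"
    and blk_nonempty: "\<forall>i<N. \<exists>j. blk j = i"
    and f_block: "\<forall>i<N. \<forall>x y. blkproj blk i x = blkproj blk i y \<longrightarrow> f i x = f i y"
    and f_grad: "\<forall>i<N. \<forall>x. GDERIV (f i) x :> g i x"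
    and L_nonneg: "\<forall>i<N. L i \<ge> 0"
    and g_lip: "\<forall>i<N. \<forall>x y. norm (g i x - g i y) \<le> L i * norm (x - y)"
    and \<gamma>_pos: "\<forall>i<N. \<gamma> i > 0"
    and \<gamma>_bound: "\<forall>i<N. \<gamma> i * L i < real N"
    and G_proper: "proper_fun G"
    and G_lsc: "lsc_fun G"
    and G_convex: "convex_fun G"
    and argmin: "\<exists>x. \<forall>y. ereal ((\<Sum>i<N. f i x) / real N) + G x
                         \<le> ereal ((\<Sum>i<N. f i y) / real N) + G y"
  defines "F \<equiv> (\<lambda>x. (\<Sum>i<N. f i x) / real N)"
    and "gF \<equiv> (\<lambda>x. (1 / real N) *\<^sub>R (\<Sum>i<N. g i x))"
    and "T \<equiv> (\<lambda>x. proxG blk \<gamma> G (x - Gam blk \<gamma> ((1 / real N) *\<^sub>R (\<Sum>i<N. g i x))))"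
  shows "(\<forall>x. dist0 (limiting_subdiff (FBE blk \<gamma> F gF G) x)
               \<le> ereal ((real N + Max ((\<lambda>i. \<gamma> i * L i) ` {..<N}))
                        / (real N * Min ((\<lambda>i. sqrt (\<gamma> i)) ` {..<N}))
                        * normGinv blk \<gamma> (x - T x)))
       \<and> (\<exists>LT\<ge>0. \<forall>x y. normGinv blk \<gamma> (T x - T y) \<le> LT * normGinv blk \<gamma> (x - y))
       \<and> ((\<forall>i<N. \<mu> i > 0 \<and>
              convex_on UNIV (\<lambda>x. f i x - \<mu> i / 2 * (norm (blkproj blk i x))\<^sup>2))
          \<longrightarrow> (\<exists>LT\<ge>0. LT \<le> 1 - Min ((\<lambda>i. \<gamma> i * \<mu> i) ` {..<N}) / real N \<and>
                 (\<forall>x y. normGinv blk \<gamma> (T x - T y) \<le> LT * normGinv blk \<gamma> (x - y))))"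
proof -
  interpret forward_backward N blk f g L \<gamma> G
    by unfold_locales (fact assms)+
  have FgT: "F = F_avg" "gF = grad_F" "T = T_fb"
    unfolding F_def gF_def T_def F_avg_def grad_F_def T_fb_def fwd_def by (simp_all add: fun_eq_iff)
  show ?thesis
    unfolding FgT normGinv_eq
  proof (intro conjI allI impI)
    show "dist0 (limiting_subdiff (FBE blk \<gamma> F_avg grad_F G) x)
      \<le> ereal ((real N + Max ((\<lambda>i. \<gamma> i * L i) ` {..<N})) / (real N * Min ((\<lambda>i. sqrt (\<gamma> i)) ` {..<N}))
               * norm (D (x - T_fb x)))" for x
      using dist0_limiting_subdiff_FBE_le[of x]
      unfolding C_FB_def gammaL_max_def sqrt_gamma_min_def res_def .
    show "\<exists>LT\<ge>0. \<forall>x y. norm (D (T_fb x - T_fb y)) \<le> LT * norm (D (x - y))"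
      using T_fb_lipschitz by (intro exI[of _ 2]) auto
  qed (use T_fb_contraction in blast)
qed

end
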